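(* Let $\mathcal{L}=(n,\mathcal{M},\mathcal{C})$ be a simple linearization. The following are equivalent: (i) $P(\mathcal{L})$ is integral; (ii) $G(D(\mathcal{L}))$ is acyclic; (iii) the system $0\le y_m\le1$ ($m\in\mathcal{M}$), $y_{\bigcup c}\le y_m$ ($c\in\mathcal{C}$, $m\in c$), $\sum_{m\in c}y_m\le y_{\bigcup c}+|c|-1$ ($c\in\mathcal{C}$) is totally dual integral.
   Context: $[n]=\{1,\dots,n\}$; a monomial is a nonempty subset of $[n]$; $\mathcal{S}=\{\{i\}:i\in[n]\}$. A linearization is a triple $\mathcal{L}=(n,\mathcal{M},\mathcal{C})$, where $\mathcal{M}$ is a set of monomials with $\mathcal{S}\subseteq\mathcal{M}$ and $\mathcal{C}$ is a set of AND-constraints; each AND-constraint is a set $c\subseteq\mathcal{M}$ whose union $\bigcup c$ (resultant) lies in $\mathcal{M}$. $\mathcal{P}=\mathcal{M}\setminus\mathcal{S}$. Linearizations are consistent: each $m\in\mathcal{P}$ is the resultant of some $c$ with $|m'|<|m|$ for all $m'\in c$. $\mathcal{L}$ is simple if each proper monomial is the resultant of exactly one AND-constraint and $|\mathcal{C}|=|\mathcal{P}|$. $P(\mathcal{L})\subseteq\mathbb{R}^{\mathcal{M}}$ is the polytope defined by the system in (iii). $D(\mathcal{L})$ has node set $\mathcal{M}$ and, for each $c\in\mathcal{C}$, arcs from $\bigcup c$ to each $m\in c$; $G(D(\mathcal{L}))$ is its underlying undirected graph. Total dual integrality: for every integral objective with finite LP maximum, the dual has an integral optimal solution. *)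

theory Defs
  imports Complex_Main
begin

type_synonym monomial = "nat set"
type_synonym andc = "nat set set"

definition linearization :: "nat \<Rightarrow> monomial set \<Rightarrow> andc set \<Rightarrow> bool" where
  "linearization n M C \<longleftrightarrow>
     (\<forall>m\<in>M. m \<noteq> {} \<and> m \<subseteq> {1..n}) \<and>
     (\<forall>i\<in>{1..n}. {i} \<in> M) \<and>
     (\<forall>c\<in>C. c \<subseteq> M \<and> \<Union>c \<in> M) \<and>
     (\<forall>m\<in>M - {{i} | i. i \<in> {1..n}}.
        \<exists>c\<in>C. \<Union>c = m \<and> (\<forall>m'\<in>c. card m' < card m))"

definition proper_monomials :: "nat \<Rightarrow> monomial set \<Rightarrow> monomial set" where
  "proper_monomials n M = M - {{i} | i. i \<in> {1..n}}"

definition simple_linearization :: "nat \<Rightarrow> monomial set \<Rightarrow> andc set \<Rightarrow> bool" where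
  "simple_linearization n M C \<longleftrightarrow> linearization n M C \<and>
     (\<forall>m\<in>proper_monomials n M. \<exists>!c. c \<in> C \<and> \<Union>c = m) \<and>
     card C = card (proper_monomials n M)"

text \<open>Row indices of the linear system describing P(L).\<close>
datatype row = Lo monomial | Up monomial | Ord andc monomial | Sm andc

definition rows :: "monomial set \<Rightarrow> andc set \<Rightarrow> row set" where
  "rows M C = Lo ` M \<union> Up ` M \<union> {Ord c m | c m. c \<in> C \<and> m \<in> c} \<union> Sm ` C"

definition ind :: "bool \<Rightarrow> real" where "ind b = (if b then 1 else 0)"

text \<open>Coefficient of variable m' in row r (system written as A y \<le> b).\<close>
fun coef :: "row \<Rightarrow> monomial \<Rightarrow> real" where
  "coef (Lo m) m' = - ind (m' = m)"
| "coef (Up m) m' = ind (m' = m)"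
| "coef (Ord c m) m' = ind (m' = \<Union>c) - ind (m' = m)"
| "coef (Sm c) m' = ind (m' \<in> c) - ind (m' = \<Union>c)"

fun rhs :: "row \<Rightarrow> real" where
  "rhs (Lo m) = 0"
| "rhs (Up m) = 1"
| "rhs (Ord c m) = 0"
| "rhs (Sm c) = real (card c) - 1"

text \<open>Vectors in R^M are functions vanishing outside M.\<close>
definition PL :: "monomial set \<Rightarrow> andc set \<Rightarrow> (monomial \<Rightarrow> real) set" where
  "PL M C = {y. (\<forall>m. m \<notin> M \<longrightarrow> y m = 0) \<and>
                (\<forall>r\<in>rows M C. (\<Sum>m\<in>M. coef r m * y m) \<le> rhs r)}"

definition vertex :: "(monomial \<Rightarrow> real) set \<Rightarrow> (monomial \<Rightarrow> real) \<Rightarrow> bool" where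
  "vertex P y \<longleftrightarrow> y \<in> P \<and>
     (\<forall>a\<in>P. \<forall>b\<in>P. \<forall>t::real. 0 < t \<and> t < 1 \<and> y = (\<lambda>m. t * a m + (1 - t) * b m) \<longrightarrow> a = b)"

definition integral_polytope :: "monomial set \<Rightarrow> (monomial \<Rightarrow> real) set \<Rightarrow> bool" where
  "integral_polytope M P \<longleftrightarrow> (\<forall>y. vertex P y \<longrightarrow> (\<forall>m\<in>M. y m \<in> \<int>))"

definition TDI :: "monomial set \<Rightarrow> 'r set \<Rightarrow> ('r \<Rightarrow> monomial \<Rightarrow> real) \<Rightarrow> ('r \<Rightarrow> real) \<Rightarrow> bool" where
  "TDI M R A b \<longleftrightarrow>
    (\<forall>w :: monomial \<Rightarrow> real. (\<forall>m\<in>M. w m \<in> \<int>) \<longrightarrow>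
      (let P = {y. (\<forall>m. m \<notin> M \<longrightarrow> y m = 0) \<and> (\<forall>r\<in>R. (\<Sum>m\<in>M. A r m * y m) \<le> b r)};
           D = {lam. (\<forall>r. r \<notin> R \<longrightarrow> lam r = 0) \<and> (\<forall>r\<in>R. 0 \<le> lam r) \<and>
                    (\<forall>m\<in>M. (\<Sum>r\<in>R. lam r * A r m) = w m)}
       in (\<exists>y\<in>P. \<forall>y'\<in>P. (\<Sum>m\<in>M. w m * y' m) \<le> (\<Sum>m\<in>M. w m * y m)) \<longrightarrow>
          (\<exists>lam\<in>D. (\<forall>r\<in>R. lam r \<in> \<int>) \<and>
                  (\<forall>\<mu>\<in>D. (\<Sum>r\<in>R. b r * lam r) \<le> (\<Sum>r\<in>R. b r * \<mu> r)))))"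

text \<open>Underlying undirected graph G(D(L)): vertices M, edge {\<Union>c, m} for c \<in> C, m \<in> c.\<close>
definition adj :: "andc set \<Rightarrow> monomial \<Rightarrow> monomial \<Rightarrow> bool" where
  "adj C u v \<longleftrightarrow> (\<exists>c\<in>C. \<exists>m\<in>c. (u = \<Union>c \<and> v = m) \<or> (u = m \<and> v = \<Union>c))"

definition has_cycle :: "monomial set \<Rightarrow> andc set \<Rightarrow> bool" where
  "has_cycle M C \<longleftrightarrow> (\<exists>vs. length vs \<ge> 3 \<and> distinct vs \<and> set vs \<subseteq> M \<and>
      (\<forall>i < length vs. adj C (vs ! i) (vs ! ((i + 1) mod length vs))))"

definition acyclic_graph :: "monomial set \<Rightarrow> andc set \<Rightarrow> bool" where
  "acyclic_graph M C \<longleftrightarrow> \<not> has_cycle M C"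

end

theory Submission
  imports Defs "HOL-Library.Transitive_Closure_Table"
begin

(*
  If G(D(L)) is acyclic, the system has integral duality: for every integral objective there are
  an integral feasible point and an integral dual solution of equal value.  This gives total dual
  integrality at once, and integrality of P(L) because a vertex is the unique optimum of the sum of
  its tight rows.  Integral duality is proved by induction on the number of AND-constraints.  The
  constraint g whose resultant is largest is a leaf of the constraint structure: its resultant
  occurs in no other constraint.  If no child of g occurs elsewhere, the star of g splits off;
  otherwise the component of such a child m (in the graph without g) splits the system into two
  subsystems sharing only m, by acyclicity.  Solutions of the pieces are glued; at a shared node the
  weight of m is divided so that one side is indifferent to the value of m.  Stars and systems
  without constraints are solved explicitly.

  Conversely, on a cycle take the monomial p of largest cardinality.  Its two neighbours are
  children of the constraint g with resultant p, joined by a path that avoids the ancestors of p.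
  Give the value 1 - 1/j to the monomials that share a variable with the component of the path in
  the graph without the ancestors of p (j of them are children of g), 0 to the ancestors of p and
  1 elsewhere.  Routing a charge 1/j from each of those j children to one of them along AND-rows,
  putting 1/j on the sum row of g and rounding on the bound rows of the integral coordinates gives
  an integral objective and a dual solution whose value equals that of the point and is
  fractional.  So the optimum is neither attained at an integral vertex nor by an integral dual.
*)

section \<open>The linear system and weak duality\<close>

text \<open>The system of P(L) is A y \<le> b with A r m = coef r m and b r = rhs r: row_val V r y is the
  r-th entry of A y and col_val R l m is the m-th entry of the row vector l A.\<close>

definition row_val :: "monomial set \<Rightarrow> row \<Rightarrow> (monomial \<Rightarrow> real) \<Rightarrow> real" where
  "row_val V r y = (\<Sum>m\<in>V. coef r m * y m)"

definition col_val :: "row set \<Rightarrow> (row \<Rightarrow> real) \<Rightarrow> monomial \<Rightarrow> real" where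
  "col_val R l m = (\<Sum>r\<in>R. l r * coef r m)"

definition primal_value :: "monomial set \<Rightarrow> (monomial \<Rightarrow> real) \<Rightarrow> (monomial \<Rightarrow> real) \<Rightarrow> real" where
  "primal_value V w y = (\<Sum>m\<in>V. w m * y m)"

definition dual_value :: "row set \<Rightarrow> (row \<Rightarrow> real) \<Rightarrow> real" where
  "dual_value R l = (\<Sum>r\<in>R. rhs r * l r)"

definition dual_set :: "monomial set \<Rightarrow> andc set \<Rightarrow> (monomial \<Rightarrow> real) \<Rightarrow> (row \<Rightarrow> real) set" where
  "dual_set V G w = {l. (\<forall>r. r \<notin> rows V G \<longrightarrow> l r = 0) \<and> (\<forall>r\<in>rows V G. 0 \<le> l r) \<and>
                       (\<forall>m\<in>V. col_val (rows V G) l m = w m)}"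

definition tight_rows :: "monomial set \<Rightarrow> andc set \<Rightarrow> (monomial \<Rightarrow> real) \<Rightarrow> row set" where
  "tight_rows V G y = {r \<in> rows V G. row_val V r y = rhs r}"

lemma mem_PL:
  "y \<in> PL V G \<longleftrightarrow> (\<forall>m. m \<notin> V \<longrightarrow> y m = 0) \<and> (\<forall>r\<in>rows V G. row_val V r y \<le> rhs r)"
  by (simp add: PL_def row_val_def)

lemma TDI_iff:
  "TDI V (rows V G) coef rhs \<longleftrightarrow>
     (\<forall>w. (\<forall>m\<in>V. w m \<in> \<int>) \<longrightarrow>
        (\<exists>y\<in>PL V G. \<forall>y'\<in>PL V G. primal_value V w y' \<le> primal_value V w y) \<longrightarrow>
        (\<exists>l\<in>dual_set V G w. (\<forall>r\<in>rows V G. l r \<in> \<int>) \<and>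
           (\<forall>\<mu>\<in>dual_set V G w. dual_value (rows V G) l \<le> dual_value (rows V G) \<mu>)))"
  unfolding TDI_def Let_def PL_def dual_set_def col_val_def primal_value_def dual_value_def
  by simp

lemma ind_simps [simp]: "ind True = 1" "ind False = 0"
  by (simp_all add: ind_def)

lemma coef_Ints: "coef r m \<in> \<int>"
  by (cases r) (auto simp: ind_def)

lemma rhs_Ints: "rhs r \<in> \<int>"
  by (cases r) auto

lemma rows_eq:
  "rows V G = Lo ` V \<union> Up ` V \<union> (\<lambda>(c, m). Ord c m) ` (SIGMA c:G. c) \<union> Sm ` G"
  unfolding rows_def by auto

lemma finite_rows: "finite V \<Longrightarrow> finite G \<Longrightarrow> \<forall>c\<in>G. finite c \<Longrightarrow> finite (rows V G)"
  unfolding rows_eq by auto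

lemma sum_rows:
  assumes "finite V" "finite G" "\<forall>c\<in>G. finite c"
  shows "(\<Sum>r\<in>rows V G. f r) = (\<Sum>m\<in>V. f (Lo m)) + (\<Sum>m\<in>V. f (Up m)) +
           (\<Sum>c\<in>G. \<Sum>m\<in>c. f (Ord c m)) + (\<Sum>c\<in>G. f (Sm c))"
proof -
  let ?O = "(\<lambda>(c, m). Ord c m) ` (SIGMA c:G. c)"
  have fin: "finite (SIGMA c:G. c)" using assms by auto
  have "(\<Sum>r\<in>rows V G. f r) = (\<Sum>r\<in>Lo ` V. f r) + (\<Sum>r\<in>Up ` V. f r) + (\<Sum>r\<in>?O. f r) +
      (\<Sum>r\<in>Sm ` G. f r)"
    unfolding rows_eq using assms fin by (subst sum.union_disjoint; auto)+
  also have "(\<Sum>r\<in>?O. f r) = (\<Sum>(c, m)\<in>(SIGMA c:G. c). f (Ord c m))"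
    by (subst sum.reindex) (auto simp: inj_on_def case_prod_beta)
  also have "\<dots> = (\<Sum>c\<in>G. \<Sum>m\<in>c. f (Ord c m))"
    using assms by (subst sum.Sigma[symmetric]) auto
  finally show ?thesis
    by (simp add: sum.reindex inj_on_def)
qed

lemma sum_ind_eq: "finite V \<Longrightarrow> (\<Sum>m\<in>V. ind (m = x) * f m) = (if x \<in> V then f x else 0)"
  by (simp add: ind_def sum.delta' if_distrib[of "\<lambda>t. t * _"] cong: if_cong)

lemma row_val_Lo: "finite V \<Longrightarrow> x \<in> V \<Longrightarrow> row_val V (Lo x) y = - y x"
  by (simp add: row_val_def sum_negf sum_ind_eq)

lemma row_val_Up: "finite V \<Longrightarrow> x \<in> V \<Longrightarrow> row_val V (Up x) y = y x"
  by (simp add: row_val_def sum_ind_eq)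

lemma row_val_Ord: "finite V \<Longrightarrow> x \<in> V \<Longrightarrow> \<Union>c \<in> V \<Longrightarrow> row_val V (Ord c x) y = y (\<Union>c) - y x"
  by (simp add: row_val_def left_diff_distrib sum_subtractf sum_ind_eq)

lemma row_val_Sm:
  assumes "finite V" "c \<subseteq> V" "\<Union>c \<in> V"
  shows "row_val V (Sm c) y = (\<Sum>m\<in>c. y m) - y (\<Union>c)"
proof -
  have "(\<Sum>m\<in>V. ind (m \<in> c) * y m) = (\<Sum>m\<in>V \<inter> c. y m)"
    using assms(1) by (simp add: ind_def sum.If_cases if_distrib[of "\<lambda>t. t * _"] cong: if_cong)
  also have "V \<inter> c = c" using assms(2) by auto
  finally show ?thesis
    using assms by (simp add: row_val_def left_diff_distrib sum_subtractf sum_ind_eq)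
qed

lemma row_val_lin: "row_val V r (\<lambda>m. a * y m + b * z m) = a * row_val V r y + b * row_val V r z"
  unfolding row_val_def by (simp add: algebra_simps sum.distrib sum_distrib_left)

lemma row_val_diff: "row_val V r (\<lambda>m. y m - z m) = row_val V r y - row_val V r z"
  unfolding row_val_def by (simp add: algebra_simps sum_subtractf)

lemma primal_value_lin:
  "primal_value V w (\<lambda>m. a * y m + b * z m) = a * primal_value V w y + b * primal_value V w z"
  unfolding primal_value_def by (simp add: algebra_simps sum.distrib sum_distrib_left)

lemma primal_value_diff: "primal_value V w (\<lambda>m. y m - z m) = primal_value V w y - primal_value V w z"
  unfolding primal_value_def by (simp add: algebra_simps sum_subtractf)

lemma primal_value_col_val: "primal_value V (col_val R l) y = (\<Sum>r\<in>R. l r * row_val V r y)"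
  unfolding primal_value_def col_val_def row_val_def
  by (simp add: sum_distrib_left sum_distrib_right mult.assoc) (rule sum.swap)

lemma primal_value_dual_set:
  assumes "l \<in> dual_set V G w"
  shows "primal_value V w y = (\<Sum>r\<in>rows V G. l r * row_val V r y)"
proof -
  have "primal_value V w y = primal_value V (col_val (rows V G) l) y"
    using assms unfolding primal_value_def dual_set_def by (intro sum.cong) auto
  then show ?thesis by (simp add: primal_value_col_val)
qed

lemma weak_duality:
  assumes "y \<in> PL V G" "l \<in> dual_set V G w"
  shows "primal_value V w y \<le> dual_value (rows V G) l"
  unfolding primal_value_dual_set[OF assms(2)] dual_value_def
proof (intro sum_mono)
  fix r assume "r \<in> rows V G"
  then have "l r * row_val V r y \<le> l r * rhs r"
    using assms by (intro mult_left_mono) (auto simp: mem_PL dual_set_def)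
  then show "l r * row_val V r y \<le> rhs r * l r" by (simp add: mult.commute)
qed

lemma complementary_slackness:
  assumes "l \<in> dual_set V G w" "\<forall>r\<in>rows V G. l r \<noteq> 0 \<longrightarrow> row_val V r y = rhs r"
  shows "primal_value V w y = dual_value (rows V G) l"
  unfolding primal_value_dual_set[OF assms(1)] dual_value_def
  using assms(2) by (intro sum.cong) auto

lemma col_val_eq:
  assumes "finite V" "finite G" "\<forall>c\<in>G. finite c" "x \<in> V"
  shows "col_val (rows V G) l x = l (Up x) - l (Lo x) +
     (\<Sum>c\<in>G. \<Sum>m\<in>c. l (Ord c m) * (ind (x = \<Union>c) - ind (x = m))) +
     (\<Sum>c\<in>G. l (Sm c) * (ind (x \<in> c) - ind (x = \<Union>c)))"
proof -
  have "\<And>f. (\<Sum>m\<in>V. f m * ind (x = m)) = f x"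
    using assms(1,4) by (simp add: ind_def if_distrib[of "\<lambda>t. _ * t"] sum.delta cong: if_cong)
  then show ?thesis
    unfolding col_val_def using assms by (simp add: sum_rows sum_negf)
qed

lemma col_val_add: "col_val R (\<lambda>r. f r + h r) x = col_val R f x + col_val R h x"
  unfolding col_val_def by (simp add: distrib_right sum.distrib)

lemma col_val_sum: "finite T \<Longrightarrow> col_val R (\<lambda>r. \<Sum>t\<in>T. f t r) x = (\<Sum>t\<in>T. col_val R (f t) x)"
  unfolding col_val_def by (simp add: sum_distrib_right) (rule sum.swap)

lemma col_val_single:
  "finite R \<Longrightarrow> r0 \<in> R \<Longrightarrow> col_val R (\<lambda>r. if r = r0 then a else 0) x = a * coef r0 x"
  unfolding col_val_def by (simp add: if_distrib[of "\<lambda>t. t * _"] sum.delta' cong: if_cong)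

lemma dual_value_add: "dual_value R (\<lambda>r. f r + h r) = dual_value R f + dual_value R h"
  unfolding dual_value_def by (simp add: distrib_left sum.distrib)

lemma col_val_Ints: "\<forall>r\<in>R. l r \<in> \<int> \<Longrightarrow> col_val R l m \<in> \<int>"
  unfolding col_val_def by (auto intro!: Ints_sum Ints_mult coef_Ints)

section \<open>Optimal vertices and rounding of duals\<close>

lemma PL_convex:
  assumes "y \<in> PL V G" "z \<in> PL V G" "0 \<le> t" "t \<le> 1"
  shows "(\<lambda>m. t * y m + (1 - t) * z m) \<in> PL V G"
  using assms unfolding mem_PL row_val_lin by (auto intro: convex_bound_le)

lemma convex_comb_eq_upper:
  fixes t a b y :: real
  assumes "0 < t" "t < 1" "a \<le> y" "b \<le> y" "t * a + (1 - t) * b = y"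
  shows "a = y \<and> b = y"
proof -
  have "0 \<le> t * (y - a)" "0 \<le> (1 - t) * (y - b)" using assms by simp_all
  moreover have "t * (y - a) + (1 - t) * (y - b) = 0" using assms(5) by (simp add: algebra_simps)
  ultimately have "t * (y - a) = 0" "(1 - t) * (y - b) = 0" by linarith+
  then show ?thesis using assms(1,2) by simp
qed

lemma small_step_exists:
  fixes s d :: "'a \<Rightarrow> real"
  assumes "finite R" "\<forall>r\<in>R. 0 < s r"
  shows "\<exists>\<epsilon>>0. \<epsilon> \<le> 1 \<and> (\<forall>r\<in>R. \<epsilon> * \<bar>d r\<bar> \<le> s r)"
proof -
  define \<epsilon> where "\<epsilon> = Min (insert 1 ((\<lambda>r. s r / (1 + \<bar>d r\<bar>)) ` R))"
  have "0 < \<epsilon>" using assms by (simp add: \<epsilon>_def)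
  moreover have "\<epsilon> * \<bar>d r\<bar> \<le> s r" if "r \<in> R" for r
  proof -
    have "\<epsilon> \<le> s r / (1 + \<bar>d r\<bar>)" using assms(1) that by (simp add: \<epsilon>_def)
    then have "\<epsilon> * (1 + \<bar>d r\<bar>) \<le> s r" by (simp add: le_divide_eq add_pos_nonneg)
    then show ?thesis using \<open>0 < \<epsilon>\<close> by (simp add: algebra_simps)
  qed
  ultimately show ?thesis using assms(1) by (intro exI[of _ \<epsilon>]) (auto simp: \<epsilon>_def)
qed

lemma Ints_diff_not_Ints:
  fixes x d :: real
  assumes "x \<in> \<int>" "0 < d" "d < 1"
  shows "x - d \<notin> \<int>"
proof
  assume "x - d \<in> \<int>"
  then have "d \<in> \<int>" using assms(1) Ints_diff[of x "x - d"] by simp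
  then obtain k where "d = of_int k" by (auto elim: Ints_cases)
  then show False using assms(2,3) by simp
qed

lemma vertex_determined_by_tight_rows:
  assumes fin: "finite (rows V G)" and v: "vertex (PL V G) y" and x: "x \<in> PL V G"
    and tight: "\<forall>r\<in>tight_rows V G y. row_val V r x = rhs r"
  shows "x = y"
proof -
  have y: "y \<in> PL V G" using v by (simp add: vertex_def)
  define d where "d m = x m - y m" for m
  let ?N = "rows V G - tight_rows V G y"
  have slack: "\<forall>r\<in>?N. 0 < rhs r - row_val V r y"
    using y by (auto simp: mem_PL tight_rows_def less_le)
  obtain \<epsilon> where \<epsilon>: "0 < \<epsilon>" "\<epsilon> \<le> 1" "\<forall>r\<in>?N. \<epsilon> * \<bar>row_val V r d\<bar> \<le> rhs r - row_val V r y"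
    using small_step_exists[OF _ slack, of "\<lambda>r. row_val V r d"] fin by auto
  define a where "a m = (1 - \<epsilon>) * y m + \<epsilon> * x m" for m
  define b where "b m = y m - \<epsilon> * d m" for m
  have a: "a \<in> PL V G"
    unfolding a_def using PL_convex[OF y x, of "1 - \<epsilon>"] \<epsilon> by simp
  have b: "b \<in> PL V G"
    unfolding mem_PL
  proof (intro conjI allI impI ballI)
    fix m assume "m \<notin> V" then show "b m = 0" using x y by (simp add: b_def d_def mem_PL)
  next
    fix r assume r: "r \<in> rows V G"
    have b: "row_val V r b = row_val V r y - \<epsilon> * row_val V r d"
      unfolding row_val_def b_def by (simp add: algebra_simps sum_subtractf sum_distrib_left)
    show "row_val V r b \<le> rhs r"
    proof (cases "r \<in> tight_rows V G y")
      case True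
      then have "row_val V r d = 0" using tight unfolding d_def row_val_diff tight_rows_def by simp
      then show ?thesis using True b by (simp add: tight_rows_def)
    next
      case False
      have "- (\<epsilon> * row_val V r d) \<le> \<epsilon> * \<bar>row_val V r d\<bar>" using \<epsilon>(1) by (simp add: abs_if)
      moreover have "\<epsilon> * \<bar>row_val V r d\<bar> \<le> rhs r - row_val V r y" using \<epsilon>(3) r False by blast
      ultimately show ?thesis unfolding b by linarith
    qed
  qed
  have mid: "y = (\<lambda>m. (1/2) * a m + (1 - 1/2) * b m)"
    by (auto simp: a_def b_def d_def algebra_simps)
  have vx: "\<forall>a\<in>PL V G. \<forall>b\<in>PL V G. \<forall>t::real.
      0 < t \<and> t < 1 \<and> y = (\<lambda>m. t * a m + (1 - t) * b m) \<longrightarrow> a = b"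
    using v by (simp add: vertex_def)
  have "a = b" using vx[rule_format, OF a b, of "1/2"] mid by simp
  have "d m = 0" for m
  proof -
    have "a m = b m" using \<open>a = b\<close> by simp
    then have "\<epsilon> * d m = 0" by (simp add: a_def b_def d_def algebra_simps)
    then show ?thesis using \<epsilon>(1) by simp
  qed
  then show "x = y" by (simp add: d_def fun_eq_iff)
qed

text \<open>col_val T (\<lambda>_. 1) is the sum of the rows in T.\<close>

lemma vertex_unique_optimum:
  assumes fin: "finite (rows V G)" and v: "vertex (PL V G) y" and x: "x \<in> PL V G"
    and T: "T = tight_rows V G y"
    and ge: "primal_value V (col_val T (\<lambda>_. 1)) y \<le> primal_value V (col_val T (\<lambda>_. 1)) x"
  shows "x = y"
proof (rule vertex_determined_by_tight_rows[OF fin v x], rule ccontr)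
  assume "\<not> (\<forall>r\<in>tight_rows V G y. row_val V r x = rhs r)"
  then obtain r0 where r0: "r0 \<in> T" "row_val V r0 x \<noteq> rhs r0" using T by blast
  have fT: "finite T" using fin T unfolding tight_rows_def by simp
  have le: "\<forall>r\<in>T. row_val V r x \<le> rhs r" using x T by (auto simp: mem_PL tight_rows_def)
  have "(\<Sum>r\<in>T. row_val V r x) < (\<Sum>r\<in>T. rhs r)"
    using le r0 fT by (intro sum_strict_mono_ex1) (auto simp: less_le)
  moreover have "(\<Sum>r\<in>T. row_val V r y) = (\<Sum>r\<in>T. rhs r)"
    using T by (simp add: tight_rows_def)
  ultimately show False using ge by (simp add: primal_value_col_val)
qed

lemma row_val_step: "row_val V r (\<lambda>m. z m + s * e m) = row_val V r z + s * row_val V r e"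
  unfolding row_val_def by (simp add: algebra_simps sum.distrib sum_distrib_left)

lemma primal_value_step:
  "primal_value V w (\<lambda>m. z m + s * e m) = primal_value V w z + s * primal_value V w e"
  unfolding primal_value_def by (simp add: algebra_simps sum.distrib sum_distrib_left)

lemma ray_step:
  assumes fin: "finite (rows V G)" and z: "z \<in> PL V G"
    and e0: "\<forall>m. m \<notin> V \<longrightarrow> e m = 0"
    and flat: "\<forall>r\<in>tight_rows V G z. row_val V r e = 0"
    and r0: "r0 \<in> rows V G" "0 < row_val V r0 e"
  shows "\<exists>s\<ge>0. (\<lambda>m. z m + s * e m) \<in> PL V G \<and>
               tight_rows V G z \<subset> tight_rows V G (\<lambda>m. z m + s * e m)"
proof -
  define N where "N = {r \<in> rows V G. 0 < row_val V r e}"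
  define q where "q r = (rhs r - row_val V r z) / row_val V r e" for r
  have fN: "finite N" using fin by (simp add: N_def)
  have "Min (q ` N) \<in> q ` N" using fN r0 by (intro Min_in) (auto simp: N_def)
  then obtain rs where "rs \<in> N" "q rs = Min (q ` N)" by (metis imageE)
  then have rs: "rs \<in> N" "\<forall>r\<in>N. q rs \<le> q r" using fN by simp_all
  let ?s = "q rs" and ?z = "\<lambda>m. z m + q rs * e m"
  have slack: "row_val V r z \<le> rhs r" if "r \<in> rows V G" for r using z that by (simp add: mem_PL)
  have s0: "0 \<le> ?s" using rs slack by (simp add: q_def N_def)
  have "?z \<in> PL V G"
    unfolding mem_PL row_val_step
  proof (intro conjI allI impI ballI)
    fix m assume "m \<notin> V" then show "z m + ?s * e m = 0" using z e0 by (simp add: mem_PL)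
  next
    fix r assume r: "r \<in> rows V G"
    show "row_val V r z + ?s * row_val V r e \<le> rhs r"
    proof (cases "0 < row_val V r e")
      case True
      then have "?s \<le> q r" using rs r by (simp add: N_def)
      then show ?thesis using True by (simp add: q_def pos_le_divide_eq algebra_simps)
    next
      case False
      then show ?thesis using slack[OF r] s0 by (smt (verit) mult_nonneg_nonpos)
    qed
  qed
  moreover have "tight_rows V G z \<subset> tight_rows V G ?z"
  proof -
    have "tight_rows V G z \<subseteq> tight_rows V G ?z"
      using flat by (auto simp: tight_rows_def row_val_step)
    moreover have "rs \<in> tight_rows V G ?z"
      using rs(1) unfolding tight_rows_def row_val_step by (simp add: N_def q_def)
    moreover have "rs \<notin> tight_rows V G z"
      using rs(1) flat by (auto simp: N_def)
    ultimately show ?thesis by blast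
  qed
  ultimately show ?thesis using s0 by blast
qed

lemma optimal_nonvertex_step:
  assumes fin: "finite V" "finite (rows V G)" and z: "z \<in> PL V G"
    and opt: "\<forall>y\<in>PL V G. primal_value V w y \<le> primal_value V w z"
    and nv: "\<not> vertex (PL V G) z"
  shows "\<exists>z'\<in>PL V G. primal_value V w z' = primal_value V w z \<and> tight_rows V G z \<subset> tight_rows V G z'"
proof -
  obtain a b and t :: real where a: "a \<in> PL V G" and b: "b \<in> PL V G" and t: "0 < t" "t < 1"
    and zab: "z = (\<lambda>m. t * a m + (1 - t) * b m)" and ab: "a \<noteq> b"
    using z nv unfolding vertex_def by blast
  have "t * primal_value V w a + (1 - t) * primal_value V w b = primal_value V w z"
    by (simp add: zab primal_value_lin)
  then have "primal_value V w a = primal_value V w b"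
    using convex_comb_eq_upper[OF t] opt a b by (metis (no_types, lifting))
  moreover have "row_val V r a = row_val V r b" if r: "r \<in> tight_rows V G z" for r
  proof -
    have "t * row_val V r a + (1 - t) * row_val V r b = rhs r"
      using r by (simp add: zab row_val_lin tight_rows_def)
    moreover have "row_val V r a \<le> rhs r" "row_val V r b \<le> rhs r"
      using a b r by (auto simp: mem_PL tight_rows_def)
    ultimately show ?thesis using convex_comb_eq_upper[OF t] by metis
  qed
  moreover obtain m0 where m0: "a m0 \<noteq> b m0" using ab by blast
  moreover define e where "e = (if b m0 < a m0 then (\<lambda>m. a m - b m) else (\<lambda>m. b m - a m))"
  ultimately have e_obj: "primal_value V w e = 0"
    and flat: "\<forall>r\<in>tight_rows V G z. row_val V r e = 0" and e_m0: "0 < e m0"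
    by (auto simp: e_def primal_value_diff row_val_diff)
  have e0: "\<forall>m. m \<notin> V \<longrightarrow> e m = 0" using a b by (simp add: e_def mem_PL)
  then have "m0 \<in> V" using e_m0 by force
  then have "Up m0 \<in> rows V G" "0 < row_val V (Up m0) e"
    using fin e_m0 by (simp_all add: rows_def row_val_Up)
  then obtain s where "(\<lambda>m. z m + s * e m) \<in> PL V G"
    "tight_rows V G z \<subset> tight_rows V G (\<lambda>m. z m + s * e m)"
    using ray_step[OF fin(2) z e0 flat] by blast
  then show ?thesis using e_obj by (intro bexI[of _ "\<lambda>m. z m + s * e m"]) (simp_all add: primal_value_step)
qed

lemma optimal_vertex_exists:
  assumes fin: "finite V" "finite (rows V G)" and y: "y \<in> PL V G"
    and opt: "\<forall>y'\<in>PL V G. primal_value V w y' \<le> primal_value V w y"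
  shows "\<exists>v. vertex (PL V G) v \<and> primal_value V w v = primal_value V w y"
  using y opt
proof (induction "card (rows V G) - card (tight_rows V G y)" arbitrary: y rule: less_induct)
  case less
  show ?case
  proof (cases "vertex (PL V G) y")
    case False
    then obtain z where z: "z \<in> PL V G" "primal_value V w z = primal_value V w y"
      and more: "tight_rows V G y \<subset> tight_rows V G z"
      using optimal_nonvertex_step[OF fin less.prems] by blast
    have "card (tight_rows V G y) < card (tight_rows V G z)"
      using more fin by (intro psubset_card_mono) (auto simp: tight_rows_def)
    moreover have "card (tight_rows V G z) \<le> card (rows V G)"
      using fin by (intro card_mono) (auto simp: tight_rows_def)
    ultimately show ?thesis using less.hyps[of z] z less.prems(2) by auto
  qed (use less.prems in blast)
qed

text \<open>Nonnegative multipliers on the bound rows of the coordinates where y is 0 or 1 make the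
  objective integral without destroying complementary slackness.\<close>

lemma rounded_dual:
  assumes fin: "finite V" "finite G" "\<forall>c\<in>G. finite c"
    and \<mu>: "\<forall>r. r \<notin> rows V G \<longrightarrow> \<mu> r = 0" "\<forall>r. 0 \<le> \<mu> r"
    and slack: "\<forall>r\<in>rows V G. \<mu> r \<noteq> 0 \<longrightarrow> row_val V r y = rhs r"
    and frac: "\<forall>m\<in>V. y m \<noteq> 0 \<longrightarrow> y m \<noteq> 1 \<longrightarrow> col_val (rows V G) \<mu> m \<in> \<int>"
  obtains l w where "l \<in> dual_set V G w" "\<forall>m\<in>V. w m \<in> \<int>"
    "primal_value V w y = dual_value (rows V G) l"
    "\<forall>m\<in>V. y m \<noteq> 0 \<longrightarrow> y m \<noteq> 1 \<longrightarrow> w m = col_val (rows V G) \<mu> m"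
proof -
  let ?c = "col_val (rows V G) \<mu>"
  define \<rho> where "\<rho> r = (case r of
      Lo m \<Rightarrow> if m \<in> V \<and> y m = 0 then ?c m - of_int \<lfloor>?c m\<rfloor> else 0
    | Up m \<Rightarrow> if m \<in> V \<and> y m = 1 then of_int \<lceil>?c m\<rceil> - ?c m else 0
    | _ \<Rightarrow> 0)" for r
  define l where "l = (\<lambda>r. \<mu> r + \<rho> r)"
  define w where "w = col_val (rows V G) l"
  have w: "w m = ?c m + \<rho> (Up m) - \<rho> (Lo m)" if "m \<in> V" for m
  proof -
    have "col_val (rows V G) \<rho> m = \<rho> (Up m) - \<rho> (Lo m)"
      using col_val_eq[OF fin that, of \<rho>] by (simp add: \<rho>_def)
    then show ?thesis by (simp add: w_def l_def col_val_add)
  qed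
  have "l \<in> dual_set V G w"
    unfolding dual_set_def
  proof (intro CollectI conjI allI impI ballI)
    fix r assume "r \<notin> rows V G"
    then show "l r = 0" using \<mu> by (cases r) (auto simp: l_def \<rho>_def rows_def)
  next
    fix r
    have "0 \<le> \<rho> r" by (cases r) (auto simp: \<rho>_def le_of_int_ceiling)
    then show "0 \<le> l r" using \<mu> by (simp add: l_def)
  qed (simp add: w_def)
  moreover have "\<forall>m\<in>V. w m \<in> \<int>"
    using frac by (auto simp: w \<rho>_def)
  moreover have "primal_value V w y = dual_value (rows V G) l"
  proof (rule complementary_slackness[OF \<open>l \<in> dual_set V G w\<close>], intro ballI impI)
    fix r assume r: "r \<in> rows V G" and "l r \<noteq> 0"
    then consider "\<mu> r \<noteq> 0" | m where "m \<in> V" "r = Lo m" "y m = 0" | m where "m \<in> V" "r = Up m" "y m = 1"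
      by (cases r) (auto simp: l_def \<rho>_def split: if_splits)
    then show "row_val V r y = rhs r"
      by cases (use slack r fin in \<open>auto simp: row_val_Lo row_val_Up\<close>)
  qed
  moreover have "\<forall>m\<in>V. y m \<noteq> 0 \<longrightarrow> y m \<noteq> 1 \<longrightarrow> w m = ?c m"
    by (auto simp: w \<rho>_def)
  ultimately show ?thesis using that by blast
qed

section \<open>Integral duality\<close>

definition and_system :: "monomial set \<Rightarrow> andc set \<Rightarrow> bool" where
  "and_system V G \<longleftrightarrow> finite V \<and> (\<forall>c\<in>G. c \<noteq> {} \<and> c \<subseteq> V \<and> \<Union>c \<in> V)"

lemma and_system_finite:
  assumes "and_system V G"
  shows "finite V" "finite G" "\<forall>c\<in>G. finite c" "finite (rows V G)"
proof -
  show fV: "finite V" using assms by (simp add: and_system_def)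
  have "G \<subseteq> Pow V" using assms by (auto simp: and_system_def)
  then show fG: "finite G" using fV finite_subset by blast
  show fc: "\<forall>c\<in>G. finite c" using assms fV by (meson and_system_def finite_subset)
  show "finite (rows V G)" using fV fG fc by (rule finite_rows)
qed

lemma and_system_Un: "and_system V1 G1 \<Longrightarrow> and_system V2 G2 \<Longrightarrow> and_system (V1 \<union> V2) (G1 \<union> G2)"
  unfolding and_system_def by blast

lemma coef_outside:
  assumes "and_system V G" "r \<in> rows V G" "m \<notin> V"
  shows "coef r m = 0"
  using assms by (cases r) (auto simp: and_system_def rows_def ind_def)

lemma row_val_extend:
  assumes "and_system V G" "r \<in> rows V G" "V \<subseteq> V'" "finite V'" "\<forall>m\<in>V. y m = z m"
  shows "row_val V' r y = row_val V r z"
proof -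
  have "row_val V' r y = row_val V r y"
    unfolding row_val_def using assms coef_outside by (intro sum.mono_neutral_right) auto
  also have "\<dots> = row_val V r z" unfolding row_val_def using assms(5) by simp
  finally show ?thesis .
qed

lemma col_val_dual_set:
  assumes "and_system V G" "l \<in> dual_set V G w"
  shows "col_val (rows V G) l m = (if m \<in> V then w m else 0)"
  using assms coef_outside unfolding dual_set_def col_val_def by auto

lemma col_val_restrict:
  "finite R \<Longrightarrow> R' \<subseteq> R \<Longrightarrow> \<forall>r. r \<notin> R' \<longrightarrow> l r = 0 \<Longrightarrow> col_val R l m = col_val R' l m"
  unfolding col_val_def by (rule sum.mono_neutral_right) auto

lemma dual_value_restrict:
  "finite R \<Longrightarrow> R' \<subseteq> R \<Longrightarrow> \<forall>r. r \<notin> R' \<longrightarrow> l r = 0 \<Longrightarrow> dual_value R l = dual_value R' l"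
  unfolding dual_value_def by (rule sum.mono_neutral_right) auto

definition int_points :: "monomial set \<Rightarrow> andc set \<Rightarrow> (monomial \<Rightarrow> real) set" where
  "int_points V G = {x \<in> PL V G. \<forall>m\<in>V. x m \<in> \<int>}"

lemma int_points_01:
  assumes "finite V" "x \<in> int_points V G" "m \<in> V"
  shows "x m = 0 \<or> x m = 1"
proof -
  have "Lo m \<in> rows V G" "Up m \<in> rows V G" using assms(3) by (auto simp: rows_def)
  then have "0 \<le> x m" "x m \<le> 1"
    using assms by (auto simp: int_points_def mem_PL row_val_Lo row_val_Up)
  moreover obtain k where "x m = of_int k" using assms by (auto simp: int_points_def elim: Ints_cases)
  ultimately show ?thesis by auto
qed

lemma finite_int_points:
  assumes "finite V"
  shows "finite (int_points V G)"
proof (rule finite_subset)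
  show "int_points V G \<subseteq> {x. \<forall>m. (m \<in> V \<longrightarrow> x m \<in> {0, 1}) \<and> (m \<notin> V \<longrightarrow> x m = 0)}"
    using int_points_01[OF assms] by (auto simp: int_points_def mem_PL)
  show "finite {x. \<forall>m. (m \<in> V \<longrightarrow> x m \<in> {0::real, 1}) \<and> (m \<notin> V \<longrightarrow> x m = 0)}"
    using assms by (intro finite_set_of_finite_funs) auto
qed

lemma const_int_point:
  assumes "and_system V G" "t = 0 \<or> t = 1"
  shows "(\<lambda>m. if m \<in> V then t else 0) \<in> int_points V G"
proof -
  have fV: "finite V" using assms by (simp add: and_system_def)
  have "row_val V r (\<lambda>m. if m \<in> V then t else 0) \<le> rhs r" if r: "r \<in> rows V G" for r
  proof (cases r)
    case (Sm c)
    then have c: "c \<in> G" using r by (auto simp: rows_def)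
    then have "c \<subseteq> V" "\<Union>c \<in> V" "card c \<noteq> 0"
      using assms(1) and_system_finite(3)[OF assms(1)] by (auto simp: and_system_def)
    then show ?thesis using Sm fV assms(2) by (auto simp: row_val_Sm subsetD)
  next
    case (Ord c m)
    then have "c \<in> G" "m \<in> c" using r by (auto simp: rows_def)
    then have "m \<in> V" "\<Union>c \<in> V" using assms(1) by (auto simp: and_system_def)
    then show ?thesis using Ord fV by (simp add: row_val_Ord)
  qed (use r fV assms(2) in \<open>auto simp: rows_def row_val_Lo row_val_Up\<close>)
  then show ?thesis using assms(2) by (auto simp: int_points_def mem_PL)
qed

definition integral_duality :: "monomial set \<Rightarrow> andc set \<Rightarrow> bool" where
  "integral_duality V G \<longleftrightarrow> (\<forall>w. (\<forall>m\<in>V. w m \<in> \<int>) \<longrightarrow>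
     (\<exists>x l. x \<in> int_points V G \<and> l \<in> dual_set V G w \<and> (\<forall>r. l r \<in> \<int>) \<and>
            primal_value V w x = dual_value (rows V G) l))"

lemma integral_dualityD:
  assumes "integral_duality V G" "\<forall>m\<in>V. w m \<in> \<int>"
  obtains x l where "x \<in> int_points V G" "l \<in> dual_set V G w" "\<forall>r. l r \<in> \<int>"
    "primal_value V w x = dual_value (rows V G) l"
  using assms unfolding integral_duality_def by blast

lemma integral_duality_no_constraints:
  assumes "finite V"
  shows "integral_duality V {}"
  unfolding integral_duality_def
proof (intro allI impI)
  fix w :: "monomial \<Rightarrow> real" assume w: "\<forall>m\<in>V. w m \<in> \<int>"
  define x where "x m = (if m \<in> V \<and> 0 < w m then 1 else 0 :: real)" for m
  define l where "l r = (case r of Lo m \<Rightarrow> if m \<in> V then max (- w m) 0 else 0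
                          | Up m \<Rightarrow> if m \<in> V then max (w m) 0 else 0 | _ \<Rightarrow> 0)" for r
  have rows: "rows V {} = Lo ` V \<union> Up ` V" by (auto simp: rows_def)
  have "x \<in> int_points V {}"
    using assms by (auto simp: int_points_def mem_PL rows row_val_Lo row_val_Up x_def)
  moreover have "l \<in> dual_set V {} w"
    unfolding dual_set_def
  proof (intro CollectI conjI allI impI ballI)
    fix r assume "r \<notin> rows V {}" then show "l r = 0" by (cases r) (auto simp: rows l_def)
  next
    fix r assume "r \<in> rows V {}" then show "0 \<le> l r" by (auto simp: rows l_def)
  next
    fix m assume "m \<in> V" then show "col_val (rows V {}) l m = w m"
      using assms by (subst col_val_eq) (auto simp: l_def)
  qed
  moreover have "\<forall>r. l r \<in> \<int>"
    using w by (auto simp: l_def max_def split: row.split)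
  moreover have "primal_value V w x = dual_value (rows V {}) l"
  proof -
    have "dual_value (rows V {}) l = (\<Sum>m\<in>V. max (w m) 0)"
      unfolding dual_value_def using assms by (subst sum_rows) (auto simp: l_def)
    also have "\<dots> = primal_value V w x" unfolding primal_value_def x_def by (intro sum.cong) auto
    finally show ?thesis by simp
  qed
  ultimately show "\<exists>x l. x \<in> int_points V {} \<and> l \<in> dual_set V {} w \<and> (\<forall>r. l r \<in> \<int>) \<and>
      primal_value V w x = dual_value (rows V {}) l" by blast
qed

lemma and_system_star: "finite c \<Longrightarrow> c \<noteq> {} \<Longrightarrow> and_system (insert (\<Union>c) c) {c}"
  by (auto simp: and_system_def)

lemma star_subset_point:
  assumes "finite c" "\<Union>c \<notin> c" "S \<subset> c"
  shows "(\<lambda>m. if m \<in> S then 1 else 0) \<in> int_points (insert (\<Union>c) c) {c}"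
proof -
  let ?V = "insert (\<Union>c) c" and ?x = "\<lambda>m. if m \<in> S then 1 else 0 :: real"
  have fV: "finite ?V" using assms(1) by simp
  have p: "?x (\<Union>c) = 0" using assms(2,3) by auto
  have "(\<Sum>m\<in>c. ?x m) = real (card S)"
    using assms(1,3) by (simp add: sum.If_cases Int_absorb1 less_imp_le)
  also have "\<dots> \<le> real (card c) - 1"
    using psubset_card_mono[OF assms(1,3)] by linarith
  finally have sum: "(\<Sum>m\<in>c. ?x m) \<le> real (card c) - 1" .
  have "row_val ?V r ?x \<le> rhs r" if r: "r \<in> rows ?V {c}" for r
  proof -
    consider m where "m \<in> ?V" "r = Lo m" | m where "m \<in> ?V" "r = Up m"
      | m where "m \<in> c" "r = Ord c m" | "r = Sm c"
      using r by (auto simp: rows_def)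
    then show ?thesis
    proof cases
      case 3 then show ?thesis using fV p by (simp add: row_val_Ord)
    next
      case 4 then show ?thesis using fV p sum by (simp add: row_val_Sm subset_insertI)
    qed (use fV in \<open>auto simp: row_val_Lo row_val_Up\<close>)
  qed
  then show ?thesis using assms(3) by (auto simp: int_points_def mem_PL)
qed

text \<open>The dual of a star: the negative part of each child weight goes onto its AND-row, an amount
  s of the positive parts onto the sum row, and the parent's bound rows absorb the rest.\<close>

definition star_dual :: "andc \<Rightarrow> (monomial \<Rightarrow> real) \<Rightarrow> real \<Rightarrow> row \<Rightarrow> real" where
  "star_dual c w s r =
     (let A = w (\<Union>c) - (\<Sum>m\<in>c. max (- w m) 0) + s in
      case r of
        Lo m \<Rightarrow> if m = \<Union>c then max (- A) 0 else 0
      | Up m \<Rightarrow> if m = \<Union>c then max A 0 else if m \<in> c then max (w m) 0 - s else 0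
      | Ord c' m \<Rightarrow> if c' = c \<and> m \<in> c then max (- w m) 0 else 0
      | Sm c' \<Rightarrow> if c' = c then s else 0)"

lemma star_dual_feasible:
  assumes fc: "finite c" and pc: "\<Union>c \<notin> c" and s: "0 \<le> s" "\<forall>m\<in>c. s \<le> max (w m) 0"
  shows "star_dual c w s \<in> dual_set (insert (\<Union>c) c) {c} w"
proof -
  let ?p = "\<Union>c" and ?V = "insert (\<Union>c) c" and ?l = "star_dual c w s"
  have fV: "finite ?V" using fc by simp
  have rows: "rows ?V {c} = Lo ` ?V \<union> Up ` ?V \<union> Ord c ` c \<union> {Sm c}" by (auto simp: rows_def)
  have col_p: "col_val (rows ?V {c}) ?l ?p = w ?p"
  proof -
    have "\<forall>m\<in>c. ?p \<noteq> m" using pc by auto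
    then have "(\<Sum>m\<in>c. ?l (Ord c m) * (ind (?p = ?p) - ind (?p = m))) = (\<Sum>m\<in>c. max (- w m) 0)"
      by (auto simp: star_dual_def intro!: sum.cong)
    then show ?thesis using fc pc by (subst col_val_eq) (auto simp: star_dual_def Let_def max_def)
  qed
  have col_c: "col_val (rows ?V {c}) ?l x = w x" if x: "x \<in> c" for x
  proof -
    have "x \<noteq> ?p" using x pc by auto
    then have "(\<Sum>m\<in>c. ?l (Ord c m) * (ind (x = ?p) - ind (x = m))) =
        (\<Sum>m\<in>c. - (if x = m then max (- w m) 0 else 0))"
      by (intro sum.cong) (auto simp: star_dual_def)
    also have "\<dots> = - max (- w x) 0" using x fc by (simp add: sum_negf)
    finally have ord: "(\<Sum>m\<in>c. ?l (Ord c m) * (ind (x = ?p) - ind (x = m))) = - max (- w x) 0" .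
    have "col_val (rows ?V {c}) ?l x = ?l (Up x) - ?l (Lo x) +
        (\<Sum>m\<in>c. ?l (Ord c m) * (ind (x = ?p) - ind (x = m))) + ?l (Sm c) * (ind (x \<in> c) - ind (x = ?p))"
      using col_val_eq[of ?V "{c}" x ?l] fV fc x by simp
    then show ?thesis using ord x \<open>x \<noteq> ?p\<close> by (simp add: star_dual_def max_def)
  qed
  show ?thesis
    unfolding dual_set_def
  proof (intro CollectI conjI allI impI ballI)
    fix r assume "r \<notin> rows ?V {c}" then show "?l r = 0" by (cases r) (auto simp: rows star_dual_def)
  next
    fix r assume "r \<in> rows ?V {c}" then show "0 \<le> ?l r" using s by (auto simp: rows star_dual_def)
  next
    fix m assume "m \<in> ?V" then show "col_val (rows ?V {c}) ?l m = w m" using col_p col_c by auto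
  qed
qed

lemma star_dual_Ints:
  assumes "\<forall>m\<in>insert (\<Union>c) c. w m \<in> \<int>" "s \<in> \<int>"
  shows "star_dual c w s r \<in> \<int>"
proof -
  have "(\<Sum>m\<in>c. max (- w m) 0) \<in> \<int>" using assms(1) by (auto simp: max_def intro!: Ints_sum)
  then have "w (\<Union>c) - (\<Sum>m\<in>c. max (- w m) 0) + s \<in> \<int>" using assms by simp
  then show ?thesis using assms by (auto simp: star_dual_def Let_def max_def split: row.split)
qed

lemma star_dual_value:
  assumes fc: "finite c" and pc: "\<Union>c \<notin> c"
  shows "dual_value (rows (insert (\<Union>c) c) {c}) (star_dual c w s) =
    max (w (\<Union>c) - (\<Sum>m\<in>c. max (- w m) 0) + s) 0 + (\<Sum>m\<in>c. max (w m) 0) - s"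
proof -
  have "dual_value (rows (insert (\<Union>c) c) {c}) (star_dual c w s) =
      max (w (\<Union>c) - (\<Sum>m\<in>c. max (- w m) 0) + s) 0 + (\<Sum>m\<in>c. max (w m) 0 - s) + (real (card c) - 1) * s"
    unfolding dual_value_def using fc pc
    by (subst sum_rows) (auto simp: star_dual_def Let_def intro!: sum.cong)
  then show ?thesis by (simp add: sum_subtractf algebra_simps)
qed

text \<open>With s the smaller of the positive parts of the least child weight and of the negated parent
  weight, the dual value is that of the all-ones point or of the best point with parent 0.\<close>

lemma star_dual_optimal:
  assumes fc: "finite c" and ne: "c \<noteq> {}" and pc: "\<Union>c \<notin> c"
    and w: "\<forall>m\<in>insert (\<Union>c) c. w m \<in> \<int>"
  shows "\<exists>l\<in>dual_set (insert (\<Union>c) c) {c} w. (\<forall>r. l r \<in> \<int>) \<and>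
    (dual_value (rows (insert (\<Union>c) c) {c}) l = w (\<Union>c) + (\<Sum>m\<in>c. w m) \<or>
     dual_value (rows (insert (\<Union>c) c) {c}) l = (\<Sum>m\<in>c. max (w m) 0) - max (Min (w ` c)) 0)"
proof -
  let ?p = "\<Union>c"
  define N where "N = (\<Sum>m\<in>c. max (- w m) 0)"
  define P where "P = (\<Sum>m\<in>c. max (w m) 0)"
  define \<mu> where "\<mu> = Min (w ` c)"
  define s where "s = min (max \<mu> 0) (max (- w ?p) 0)"
  define A where "A = w ?p - N + s"
  have \<mu>_le: "\<mu> \<le> w m" if "m \<in> c" for m using fc that by (simp add: \<mu>_def)
  have "\<mu> \<in> w ` c" using fc ne by (simp add: \<mu>_def)
  then have "s \<in> \<int>" using w by (auto simp: s_def min_def max_def)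
  have s: "0 \<le> s" "\<forall>m\<in>c. s \<le> max (w m) 0"
    using \<mu>_le by (auto simp: s_def min_le_iff_disj max.coboundedI1 intro: max.mono)
  have PN: "P - N = (\<Sum>m\<in>c. w m)"
    unfolding P_def N_def sum_subtractf[symmetric] by (rule sum.cong) auto
  have s_eq: "s = max \<mu> 0" if "A < 0"
  proof (rule ccontr)
    assume "s \<noteq> max \<mu> 0"
    then have lt: "max (- w ?p) 0 < max \<mu> 0" by (auto simp: s_def)
    then have "N = 0" using \<mu>_le by (auto simp: N_def intro!: sum.neutral) (smt (verit))
    then show False using that lt by (auto simp: A_def s_def min_def max_def split: if_splits)
  qed
  have "max A 0 + P - s = w ?p + (\<Sum>m\<in>c. w m) \<or> max A 0 + P - s = P - max \<mu> 0"
    using PN s_eq by (cases "0 \<le> A") (auto simp: A_def)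
  then show ?thesis
    using star_dual_feasible[OF fc pc s] star_dual_Ints[OF w \<open>s \<in> \<int>\<close>] star_dual_value[OF fc pc, of w s]
    by (intro bexI[of _ "star_dual c w s"]) (auto simp: A_def N_def P_def \<mu>_def)
qed

lemma integral_duality_star:
  assumes fc: "finite c" and ne: "c \<noteq> {}" and pc: "\<Union>c \<notin> c"
  shows "integral_duality (insert (\<Union>c) c) {c}"
  unfolding integral_duality_def
proof (intro allI impI)
  let ?p = "\<Union>c" and ?V = "insert (\<Union>c) c"
  fix w :: "monomial \<Rightarrow> real" assume w: "\<forall>m\<in>?V. w m \<in> \<int>"
  obtain l where l: "l \<in> dual_set ?V {c} w" "\<forall>r. l r \<in> \<int>"
    and val: "dual_value (rows ?V {c}) l = w ?p + (\<Sum>m\<in>c. w m) \<or>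
              dual_value (rows ?V {c}) l = (\<Sum>m\<in>c. max (w m) 0) - max (Min (w ` c)) 0"
    using star_dual_optimal[OF fc ne pc w] by blast
  have "Min (w ` c) \<in> w ` c" using fc ne by simp
  then obtain m0 where m0: "m0 \<in> c" "w m0 = Min (w ` c)" by auto
  define S where "S = {m \<in> c - {m0}. 0 < w m}"
  let ?one = "\<lambda>m. if m \<in> ?V then 1 else 0 :: real"
  let ?xS = "\<lambda>m. if m \<in> S then 1 else 0 :: real"
  have "?one \<in> int_points ?V {c}" using and_system_star[OF fc ne] by (rule const_int_point) simp
  moreover have "primal_value ?V w ?one = w ?p + (\<Sum>m\<in>c. w m)"
    using fc pc by (simp add: primal_value_def)
  moreover have "?xS \<in> int_points ?V {c}"
    using m0 by (intro star_subset_point[OF fc pc]) (auto simp: S_def)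
  moreover have "primal_value ?V w ?xS = (\<Sum>m\<in>c. max (w m) 0) - max (Min (w ` c)) 0"
  proof -
    have "?p \<notin> S" using pc by (auto simp: S_def)
    then have "primal_value ?V w ?xS = (\<Sum>m\<in>c. w m * ?xS m)"
      using fc pc by (simp add: primal_value_def)
    also have "\<dots> = (\<Sum>m\<in>c. if m = m0 then 0 else max (w m) 0)"
      by (intro sum.cong) (auto simp: S_def max_def)
    also have "\<dots> = (\<Sum>m\<in>c. max (w m) 0) - max (w m0) 0"
      using fc m0 by (simp add: sum.If_cases sum_diff1 Diff_eq[symmetric])
    finally show ?thesis using m0 by simp
  qed
  ultimately show "\<exists>x l. x \<in> int_points ?V {c} \<and> l \<in> dual_set ?V {c} w \<and> (\<forall>r. l r \<in> \<int>) \<and>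
      primal_value ?V w x = dual_value (rows ?V {c}) l"
    using l val by metis
qed

lemma PL_glue:
  assumes S1: "and_system V1 G1" and S2: "and_system V2 G2"
    and z1: "z1 \<in> PL V1 G1" and z2: "z2 \<in> PL V2 G2"
    and agree: "\<forall>m\<in>V1 \<inter> V2. z1 m = z2 m"
  shows "(\<lambda>m. if m \<in> V1 then z1 m else z2 m) \<in> PL (V1 \<union> V2) (G1 \<union> G2)"
  unfolding mem_PL
proof (intro conjI allI impI ballI)
  let ?x = "\<lambda>m. if m \<in> V1 then z1 m else z2 m"
  have fV: "finite (V1 \<union> V2)" using S1 S2 by (simp add: and_system_def)
  fix r assume "r \<in> rows (V1 \<union> V2) (G1 \<union> G2)"
  then consider "r \<in> rows V1 G1" | "r \<in> rows V2 G2" by (auto simp: rows_def)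
  then show "row_val (V1 \<union> V2) r ?x \<le> rhs r"
  proof cases
    case 1
    then have "row_val (V1 \<union> V2) r ?x = row_val V1 r z1" using row_val_extend[OF S1 1 _ fV] by auto
    then show ?thesis using z1 1 by (simp add: mem_PL)
  next
    case 2
    then have "row_val (V1 \<union> V2) r ?x = row_val V2 r z2" using row_val_extend[OF S2 2 _ fV] agree by auto
    then show ?thesis using z2 2 by (simp add: mem_PL)
  qed
qed (use z2 in \<open>simp add: mem_PL\<close>)

lemma int_points_glue:
  assumes "and_system V1 G1" "and_system V2 G2"
    and "z1 \<in> int_points V1 G1" "z2 \<in> int_points V2 G2" "\<forall>m\<in>V1 \<inter> V2. z1 m = z2 m"
  shows "(\<lambda>m. if m \<in> V1 then z1 m else z2 m) \<in> int_points (V1 \<union> V2) (G1 \<union> G2)"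
proof -
  have "z1 \<in> PL V1 G1" "z2 \<in> PL V2 G2" using assms(3,4) by (simp_all add: int_points_def)
  then have "(\<lambda>m. if m \<in> V1 then z1 m else z2 m) \<in> PL (V1 \<union> V2) (G1 \<union> G2)"
    using PL_glue[OF assms(1,2)] assms(5) by blast
  then show ?thesis using assms(3,4) by (auto simp: int_points_def)
qed

lemma dual_set_glue:
  assumes S1: "and_system V1 G1" and S2: "and_system V2 G2"
    and l1: "l1 \<in> dual_set V1 G1 w1" and l2: "l2 \<in> dual_set V2 G2 w2"
    and w: "\<forall>m\<in>V1 \<union> V2. w m = (if m \<in> V1 then w1 m else 0) + (if m \<in> V2 then w2 m else 0)"
  shows "(\<lambda>r. l1 r + l2 r) \<in> dual_set (V1 \<union> V2) (G1 \<union> G2) w"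
    and "dual_value (rows (V1 \<union> V2) (G1 \<union> G2)) (\<lambda>r. l1 r + l2 r) =
           dual_value (rows V1 G1) l1 + dual_value (rows V2 G2) l2"
proof -
  let ?R = "rows (V1 \<union> V2) (G1 \<union> G2)"
  have fR: "finite ?R" using and_system_finite(4)[OF and_system_Un[OF S1 S2]] .
  have R1: "rows V1 G1 \<subseteq> ?R" and R2: "rows V2 G2 \<subseteq> ?R" by (auto simp: rows_def)
  have z1: "\<forall>r. r \<notin> rows V1 G1 \<longrightarrow> l1 r = 0" and z2: "\<forall>r. r \<notin> rows V2 G2 \<longrightarrow> l2 r = 0"
    using l1 l2 by (auto simp: dual_set_def)
  show "(\<lambda>r. l1 r + l2 r) \<in> dual_set (V1 \<union> V2) (G1 \<union> G2) w"
    unfolding dual_set_def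
  proof (intro CollectI conjI allI impI ballI)
    fix r assume "r \<notin> ?R"
    then have "r \<notin> rows V1 G1" "r \<notin> rows V2 G2" using R1 R2 by auto
    then show "l1 r + l2 r = 0" using z1 z2 by simp
  next
    fix r
    have "0 \<le> l1 r" using l1 z1 by (cases "r \<in> rows V1 G1") (auto simp: dual_set_def)
    moreover have "0 \<le> l2 r" using l2 z2 by (cases "r \<in> rows V2 G2") (auto simp: dual_set_def)
    ultimately show "0 \<le> l1 r + l2 r" by simp
  next
    fix m assume m: "m \<in> V1 \<union> V2"
    have "col_val ?R (\<lambda>r. l1 r + l2 r) m = col_val ?R l1 m + col_val ?R l2 m"
      by (rule col_val_add)
    also have "col_val ?R l1 m = col_val (rows V1 G1) l1 m" by (rule col_val_restrict[OF fR R1 z1])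
    also have "col_val ?R l2 m = col_val (rows V2 G2) l2 m" by (rule col_val_restrict[OF fR R2 z2])
    finally show "col_val ?R (\<lambda>r. l1 r + l2 r) m = w m"
      using col_val_dual_set[OF S1 l1, of m] col_val_dual_set[OF S2 l2, of m] w m by simp
  qed
  show "dual_value ?R (\<lambda>r. l1 r + l2 r) = dual_value (rows V1 G1) l1 + dual_value (rows V2 G2) l2"
    unfolding dual_value_add dual_value_restrict[OF fR R1 z1] dual_value_restrict[OF fR R2 z2] ..
qed

lemma integral_duality_disjoint_Un:
  assumes S1: "and_system V1 G1" and S2: "and_system V2 G2"
    and Q1: "integral_duality V1 G1" and Q2: "integral_duality V2 G2" and disj: "V1 \<inter> V2 = {}"
  shows "integral_duality (V1 \<union> V2) (G1 \<union> G2)"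
  unfolding integral_duality_def
proof (intro allI impI)
  fix w :: "monomial \<Rightarrow> real" assume w: "\<forall>m\<in>V1 \<union> V2. w m \<in> \<int>"
  obtain x1 l1 where x1: "x1 \<in> int_points V1 G1" and l1: "l1 \<in> dual_set V1 G1 w" "\<forall>r. l1 r \<in> \<int>"
    and e1: "primal_value V1 w x1 = dual_value (rows V1 G1) l1"
    using Q1 w by (auto elim: integral_dualityD)
  obtain x2 l2 where x2: "x2 \<in> int_points V2 G2" and l2: "l2 \<in> dual_set V2 G2 w" "\<forall>r. l2 r \<in> \<int>"
    and e2: "primal_value V2 w x2 = dual_value (rows V2 G2) l2"
    using Q2 w by (auto elim: integral_dualityD)
  let ?x = "\<lambda>m. if m \<in> V1 then x1 m else x2 m"
  have "\<forall>m\<in>V1 \<union> V2. w m = (if m \<in> V1 then w m else 0) + (if m \<in> V2 then w m else 0)"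
    using disj by auto
  note glue = dual_set_glue[OF S1 S2 l1(1) l2(1) this]
  have "primal_value (V1 \<union> V2) w ?x = primal_value V1 w ?x + primal_value V2 w ?x"
    unfolding primal_value_def using S1 S2 disj by (intro sum.union_disjoint) (auto simp: and_system_def)
  also have "primal_value V1 w ?x = primal_value V1 w x1" unfolding primal_value_def by simp
  also have "primal_value V2 w ?x = primal_value V2 w x2"
    unfolding primal_value_def using disj by (intro sum.cong) auto
  finally have "primal_value (V1 \<union> V2) w ?x = dual_value (rows (V1 \<union> V2) (G1 \<union> G2)) (\<lambda>r. l1 r + l2 r)"
    using e1 e2 glue(2) by simp
  moreover have "?x \<in> int_points (V1 \<union> V2) (G1 \<union> G2)" using int_points_glue[OF S1 S2 x1 x2] disj by blast
  moreover have "\<forall>r. l1 r + l2 r \<in> \<int>" using l1 l2 by auto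
  ultimately show "\<exists>x l. x \<in> int_points (V1 \<union> V2) (G1 \<union> G2) \<and> l \<in> dual_set (V1 \<union> V2) (G1 \<union> G2) w \<and>
      (\<forall>r. l r \<in> \<int>) \<and> primal_value (V1 \<union> V2) w x = dual_value (rows (V1 \<union> V2) (G1 \<union> G2)) l"
    using glue(1) by blast
qed

definition cut_value :: "monomial set \<Rightarrow> andc set \<Rightarrow> monomial \<Rightarrow> (monomial \<Rightarrow> real) \<Rightarrow> real \<Rightarrow> real" where
  "cut_value V G v w t = Max ((\<lambda>x. primal_value (V - {v}) w x) ` {x \<in> int_points V G. x v = t})"

lemma cut_value_attained:
  assumes "and_system V G" "v \<in> V" "t = 0 \<or> t = 1"
  shows "\<exists>z\<in>int_points V G. z v = t \<and> primal_value (V - {v}) w z = cut_value V G v w t"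
proof -
  let ?S = "{x \<in> int_points V G. x v = t}"
  have "finite ?S" using finite_int_points assms(1) by (simp add: and_system_def)
  moreover have "?S \<noteq> {}" using const_int_point[OF assms(1,3)] assms(2) by force
  ultimately have "cut_value V G v w t \<in> (\<lambda>x. primal_value (V - {v}) w x) ` ?S"
    unfolding cut_value_def by (intro Max_in) auto
  then show ?thesis by auto
qed

lemma cut_value_upper:
  assumes "and_system V G" "z \<in> int_points V G"
  shows "primal_value (V - {v}) w z \<le> cut_value V G v w (z v)"
proof -
  have "finite {x \<in> int_points V G. x v = z v}"
    using finite_int_points assms(1) by (simp add: and_system_def)
  then show ?thesis unfolding cut_value_def using assms(2) by (intro Max_ge) auto
qed

lemma cut_value_Ints:
  assumes "and_system V G" "v \<in> V" "t = 0 \<or> t = 1" "\<forall>m\<in>V. w m \<in> \<int>"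
  shows "cut_value V G v w t \<in> \<int>"
proof -
  obtain z where "z \<in> int_points V G" "primal_value (V - {v}) w z = cut_value V G v w t"
    using cut_value_attained[OF assms(1-3)] by blast
  moreover have "primal_value (V - {v}) w z \<in> \<int>"
    using calculation(1) assms(4) by (auto simp: primal_value_def int_points_def)
  ultimately show ?thesis by simp
qed

lemma primal_value_remove:
  "finite V \<Longrightarrow> v \<in> V \<Longrightarrow> primal_value V w x = primal_value (V - {v}) w x + w v * x v"
  unfolding primal_value_def by (simp add: sum.remove)

text \<open>The optimum as a function of the weight a of a single vertex v is
  max (cut 0) (cut 1 + a), and integral duality provides a dual of exactly this value.\<close>

lemma integral_duality_cut_dual:
  assumes S: "and_system V G" and Q: "integral_duality V G" and v: "v \<in> V"
    and w: "\<forall>m\<in>V. w m \<in> \<int>" and a: "a \<in> \<int>"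
  shows "\<exists>l. l \<in> dual_set V G (w(v := a)) \<and> (\<forall>r. l r \<in> \<int>) \<and>
    dual_value (rows V G) l = max (cut_value V G v w 0) (cut_value V G v w 1 + a)"
proof -
  have fV: "finite V" using S by (simp add: and_system_def)
  have "\<forall>m\<in>V. (w(v := a)) m \<in> \<int>" using w a by simp
  then obtain x l where x: "x \<in> int_points V G" and l: "l \<in> dual_set V G (w(v := a))" "\<forall>r. l r \<in> \<int>"
    and eq: "primal_value V (w(v := a)) x = dual_value (rows V G) l"
    by (rule integral_dualityD[OF Q])
  have val: "primal_value V (w(v := a)) z = primal_value (V - {v}) w z + a * z v" for z
    using primal_value_remove[OF fV v, of "w(v := a)" z] by (simp add: primal_value_def)
  have "dual_value (rows V G) l \<le> max (cut_value V G v w 0) (cut_value V G v w 1 + a)"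
    using int_points_01[OF fV x v] cut_value_upper[OF S x, of v w] eq val[of x] by auto
  moreover have "cut_value V G v w t + a * t \<le> dual_value (rows V G) l" if t: "t = 0 \<or> t = 1" for t
  proof -
    obtain z where "z \<in> int_points V G" "z v = t" "primal_value (V - {v}) w z = cut_value V G v w t"
      using cut_value_attained[OF S v t] by blast
    then show ?thesis
      using weak_duality[OF _ l(1), of z] val[of z] by (simp add: int_points_def)
  qed
  from this[of 0] this[of 1] have "max (cut_value V G v w 0) (cut_value V G v w 1 + a) \<le> dual_value (rows V G) l"
    by simp
  ultimately show ?thesis using l by (intro exI[of _ l]) simp
qed

lemma integral_duality_Un_vertex:
  assumes S1: "and_system V1 G1" and S2: "and_system V2 G2"
    and Q1: "integral_duality V1 G1" and Q2: "integral_duality V2 G2" and int: "V1 \<inter> V2 = {v}"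
  shows "integral_duality (V1 \<union> V2) (G1 \<union> G2)"
  unfolding integral_duality_def
proof (intro allI impI)
  fix w :: "monomial \<Rightarrow> real" assume w: "\<forall>m\<in>V1 \<union> V2. w m \<in> \<int>"
  have v1: "v \<in> V1" and v2: "v \<in> V2" and V2_V1: "\<forall>m\<in>V2 - {v}. m \<notin> V1" using int by auto
  have w1: "\<forall>m\<in>V1. w m \<in> \<int>" and w2: "\<forall>m\<in>V2. w m \<in> \<int>" using w by auto
  have fV1: "finite V1" and fV2: "finite V2" using S1 S2 by (simp_all add: and_system_def)
  define c1 where "c1 = cut_value V1 G1 v w"
  define c2 where "c2 = cut_value V2 G2 v w"
  \<comment> \<open>Give V1 the weight a of v that makes V2 indifferent to the value of v.\<close>
  define a where "a = c2 1 + w v - c2 0"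
  have aI: "a \<in> \<int>" and bI: "w v - a \<in> \<int>"
    using cut_value_Ints[OF S2 v2 _ w2] w v1 by (auto simp: a_def c2_def)
  obtain l1 where l1: "l1 \<in> dual_set V1 G1 (w(v := a))" "\<forall>r. l1 r \<in> \<int>"
    "dual_value (rows V1 G1) l1 = max (c1 0) (c1 1 + a)"
    using integral_duality_cut_dual[OF S1 Q1 v1 w1 aI] by (auto simp: c1_def)
  obtain l2 where l2: "l2 \<in> dual_set V2 G2 (w(v := w v - a))" "\<forall>r. l2 r \<in> \<int>"
    "dual_value (rows V2 G2) l2 = c2 0"
    using integral_duality_cut_dual[OF S2 Q2 v2 w2 bI] by (auto simp: c2_def a_def)
  define t :: real where "t = (if c1 1 + a \<le> c1 0 then 0 else 1)"
  have t: "t = 0 \<or> t = 1" by (simp add: t_def)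
  obtain z1 where z1: "z1 \<in> int_points V1 G1" "z1 v = t" "primal_value (V1 - {v}) w z1 = c1 t"
    using cut_value_attained[OF S1 v1 t, of w] unfolding c1_def by blast
  obtain z2 where z2: "z2 \<in> int_points V2 G2" "z2 v = t" "primal_value (V2 - {v}) w z2 = c2 t"
    using cut_value_attained[OF S2 v2 t, of w] unfolding c2_def by blast
  let ?x = "\<lambda>m. if m \<in> V1 then z1 m else z2 m"
  have "\<forall>m\<in>V1 \<union> V2. w m = (if m \<in> V1 then (w(v := a)) m else 0) + (if m \<in> V2 then (w(v := w v - a)) m else 0)"
  proof
    fix m assume "m \<in> V1 \<union> V2"
    then show "w m = (if m \<in> V1 then (w(v := a)) m else 0) + (if m \<in> V2 then (w(v := w v - a)) m else 0)"
      using v1 v2 V2_V1 by (cases "m = v") auto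
  qed
  note glue = dual_set_glue[OF S1 S2 l1(1) l2(1) this]
  have U: "V1 \<union> V2 = V1 \<union> (V2 - {v})" using v1 by auto
  have "primal_value (V1 \<union> V2) w ?x = primal_value V1 w ?x + primal_value (V2 - {v}) w ?x"
    unfolding primal_value_def U using fV1 fV2 int by (intro sum.union_disjoint) auto
  also have "primal_value V1 w ?x = c1 t + w v * t"
    using primal_value_remove[OF fV1 v1, of w z1] z1 by (simp add: primal_value_def)
  also have "primal_value (V2 - {v}) w ?x = primal_value (V2 - {v}) w z2"
    unfolding primal_value_def using V2_V1 by (intro sum.cong) auto
  also have "\<dots> = c2 t" by (rule z2(3))
  finally have "primal_value (V1 \<union> V2) w ?x = dual_value (rows (V1 \<union> V2) (G1 \<union> G2)) (\<lambda>r. l1 r + l2 r)"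
    using glue(2) l1(3) l2(3) by (auto simp: t_def a_def)
  moreover have "?x \<in> int_points (V1 \<union> V2) (G1 \<union> G2)"
    using int_points_glue[OF S1 S2 z1(1) z2(1)] z1(2) z2(2) int by auto
  moreover have "\<forall>r. l1 r + l2 r \<in> \<int>" using l1 l2 by auto
  ultimately show "\<exists>x l. x \<in> int_points (V1 \<union> V2) (G1 \<union> G2) \<and> l \<in> dual_set (V1 \<union> V2) (G1 \<union> G2) w \<and>
      (\<forall>r. l r \<in> \<int>) \<and> primal_value (V1 \<union> V2) w x = dual_value (rows (V1 \<union> V2) (G1 \<union> G2)) l"
    using glue(1) by blast
qed

lemma integral_polytope_if_integral_duality:
  assumes fin: "finite (rows V G)" and Q: "integral_duality V G"
  shows "integral_polytope V (PL V G)"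
  unfolding integral_polytope_def
proof (intro allI impI)
  fix y assume v: "vertex (PL V G) y"
  let ?T = "tight_rows V G y"
  let ?w = "col_val ?T (\<lambda>_. 1)"
  have "\<forall>m\<in>V. ?w m \<in> \<int>" by (simp add: col_val_Ints)
  then obtain x l where x: "x \<in> int_points V G" and l: "l \<in> dual_set V G ?w"
    and eq: "primal_value V ?w x = dual_value (rows V G) l"
    by (rule integral_dualityD[OF Q])
  have "y \<in> PL V G" using v by (simp add: vertex_def)
  then have "primal_value V ?w y \<le> primal_value V ?w x" using weak_duality[OF _ l] eq by simp
  then have "x = y" using x by (intro vertex_unique_optimum[OF fin v]) (simp_all add: int_points_def)
  then show "\<forall>m\<in>V. y m \<in> \<int>" using x by (simp add: int_points_def)
qed

lemma TDI_if_integral_duality: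
  assumes Q: "integral_duality V G"
  shows "TDI V (rows V G) coef rhs"
  unfolding TDI_iff
proof (intro allI impI)
  fix w :: "monomial \<Rightarrow> real" assume "\<forall>m\<in>V. w m \<in> \<int>"
  then obtain x l where x: "x \<in> int_points V G" and l: "l \<in> dual_set V G w" "\<forall>r. l r \<in> \<int>"
    and eq: "primal_value V w x = dual_value (rows V G) l"
    by (rule integral_dualityD[OF Q])
  have "dual_value (rows V G) l \<le> dual_value (rows V G) \<mu>" if "\<mu> \<in> dual_set V G w" for \<mu>
    using weak_duality[OF _ that, of x] x eq by (simp add: int_points_def)
  then show "\<exists>l\<in>dual_set V G w. (\<forall>r\<in>rows V G. l r \<in> \<int>) \<and>
      (\<forall>\<mu>\<in>dual_set V G w. dual_value (rows V G) l \<le> dual_value (rows V G) \<mu>)"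
    using l by blast
qed

lemma fractional_optimum_obstructs:
  assumes fin: "finite V" "finite (rows V G)" and w: "\<forall>m\<in>V. w m \<in> \<int>"
    and y: "y \<in> PL V G" and l: "l \<in> dual_set V G w"
    and eq: "primal_value V w y = dual_value (rows V G) l" and frac: "primal_value V w y \<notin> \<int>"
  shows "\<not> integral_polytope V (PL V G)" and "\<not> TDI V (rows V G) coef rhs"
proof -
  have opt: "\<forall>y'\<in>PL V G. primal_value V w y' \<le> primal_value V w y"
    using weak_duality[OF _ l] eq by simp
  show "\<not> integral_polytope V (PL V G)"
  proof
    assume int: "integral_polytope V (PL V G)"
    obtain v where v: "vertex (PL V G) v" "primal_value V w v = primal_value V w y"
      using optimal_vertex_exists[OF fin y opt] by blast
    have "\<forall>m\<in>V. v m \<in> \<int>" using int v(1) by (simp add: integral_polytope_def)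
    then have "primal_value V w v \<in> \<int>"
      using w unfolding primal_value_def by (auto intro!: Ints_sum Ints_mult)
    then have "primal_value V w y \<in> \<int>" using v(2) by simp
    then show False using frac by simp
  qed
  show "\<not> TDI V (rows V G) coef rhs"
  proof
    assume tdi: "TDI V (rows V G) coef rhs"
    have "\<exists>y\<in>PL V G. \<forall>y'\<in>PL V G. primal_value V w y' \<le> primal_value V w y" using y opt by blast
    then obtain l' where l': "l' \<in> dual_set V G w" "\<forall>r\<in>rows V G. l' r \<in> \<int>"
      and min: "\<forall>\<mu>\<in>dual_set V G w. dual_value (rows V G) l' \<le> dual_value (rows V G) \<mu>"
      using TDI_iff[THEN iffD1, OF tdi, rule_format, of w] w by blast
    have "primal_value V w y = dual_value (rows V G) l'"
      using weak_duality[OF y l'(1)] min l eq by fastforce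
    moreover have "dual_value (rows V G) l' \<in> \<int>"
      using l'(2) rhs_Ints unfolding dual_value_def by (auto intro!: Ints_sum Ints_mult)
    ultimately show False using frac by simp
  qed
qed

section \<open>Paths and cycles in G(D(L))\<close>

lemma adj_mono: "adj G u v \<Longrightarrow> G \<subseteq> G' \<Longrightarrow> adj G' u v"
  unfolding adj_def by blast

lemma adj_sym: "adj G u v \<longleftrightarrow> adj G v u"
  unfolding adj_def by blast

lemma adj_resultant_child: "c \<in> G \<Longrightarrow> m \<in> c \<Longrightarrow> adj G (\<Union>c) m"
  unfolding adj_def by blast

lemma adj_child_resultant: "c \<in> G \<Longrightarrow> m \<in> c \<Longrightarrow> adj G m (\<Union>c)"
  unfolding adj_def by blast

lemma has_cycle_mono: "has_cycle V G \<Longrightarrow> V \<subseteq> V' \<Longrightarrow> G \<subseteq> G' \<Longrightarrow> has_cycle V' G'"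
  unfolding has_cycle_def by (meson adj_mono order_trans)

lemma rtranclp_adj_cases: "(adj G)\<^sup>*\<^sup>* x y \<Longrightarrow> y = x \<or> (\<exists>c\<in>G. y \<in> c \<or> y = \<Union>c)"
  by (induction rule: rtranclp_induct) (auto simp: adj_def)

lemma has_cycle_closed_path:
  assumes path: "rtrancl_path (adj G) x xs y" and dist: "distinct (p # x # xs)"
    and V: "set (p # x # xs) \<subseteq> V" and px: "adj G p x" and yp: "adj G y p" and xy: "x \<noteq> y"
  shows "has_cycle V G"
proof -
  let ?vs = "p # x # xs"
  have xs: "xs \<noteq> []" using path xy by (auto elim: rtrancl_path.cases)
  have "adj G (?vs ! i) (?vs ! ((i + 1) mod length ?vs))" if i: "i < length ?vs" for i
  proof -
    consider "i = 0" | j where "i = Suc j" "j < length xs" | "i = Suc (length xs)"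
      using i by (cases i) (auto simp: less_Suc_eq)
    then show ?thesis
    proof cases
      case 1 then show ?thesis using px by simp
    next
      case 2 then show ?thesis using rtrancl_path_nth[OF path 2(2)] by simp
    next
      case 3 then show ?thesis using yp rtrancl_path_last[OF path xs] xs by (simp add: last_conv_nth)
    qed
  qed
  moreover have "3 \<le> length ?vs" using xs by (cases xs) auto
  ultimately show ?thesis using dist V unfolding has_cycle_def by blast
qed

lemma has_cycle_if_children_joined:
  assumes S: "and_system V G" and g: "g \<in> G" and pg: "\<Union>g \<notin> g"
    and top: "\<forall>g'\<in>G - {g}. \<Union>g \<notin> g' \<and> \<Union>g \<noteq> \<Union>g'"
    and x: "x \<in> g" and y: "y \<in> g" and xy: "x \<noteq> y" and path: "(adj (G - {g}))\<^sup>*\<^sup>* x y"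
  shows "has_cycle V G"
proof -
  obtain xs where "rtrancl_path (adj (G - {g})) x xs y"
    using path by (auto simp: rtranclp_eq_rtrancl_path)
  then obtain xs' where xs': "rtrancl_path (adj (G - {g})) x xs' y" "distinct (x # xs')"
    by (rule rtrancl_path_distinct)
  have nodes: "z \<noteq> \<Union>g \<and> z \<in> V" if "z \<in> set (x # xs')" for z
  proof (cases "z = x")
    case False
    then have "Rangep (adj (G - {g})) z" using that rtrancl_path_Range[OF xs'(1)] by auto
    then obtain u where "adj (G - {g}) u z" by blast
    then obtain g' where g': "g' \<in> G - {g}" "z \<in> g' \<or> z = \<Union>g'" unfolding adj_def by blast
    then have "g' \<subseteq> V" "\<Union>g' \<in> V" using S by (auto simp: and_system_def)
    then show ?thesis using top g' by blast
  next
    case True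
    have "g \<subseteq> V" using g S by (simp add: and_system_def)
    then show ?thesis using True x pg by blast
  qed
  show ?thesis
  proof (rule has_cycle_closed_path)
    show "rtrancl_path (adj G) x xs' y" using xs'(1) by (rule rtrancl_path_mono) (auto intro: adj_mono)
    show "distinct (\<Union>g # x # xs')" using xs'(2) nodes by auto
    show "set (\<Union>g # x # xs') \<subseteq> V" using nodes g S by (auto simp: and_system_def)
    show "adj G (\<Union>g) x" "adj G y (\<Union>g)" using g x y by (auto simp: adj_def)
  qed (rule xy)
qed

lemma cyclic_chain_rotate:
  assumes "\<forall>i<length vs. R (vs ! i) (vs ! ((i + 1) mod length vs))"
  shows "\<forall>i<length vs. R (rotate k vs ! i) (rotate k vs ! ((i + 1) mod length vs))"
proof (intro allI impI)
  fix i assume i: "i < length vs"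
  let ?L = "length vs"
  let ?j = "(k + i) mod ?L"
  have L: "0 < ?L" using i by linarith
  have "rotate k vs ! i = vs ! ?j" using i by (simp add: nth_rotate)
  moreover have "rotate k vs ! ((i + 1) mod ?L) = vs ! ((?j + 1) mod ?L)"
    using L by (simp add: nth_rotate mod_simps)
  moreover have "?j < ?L" using L by simp
  ultimately show "R (rotate k vs ! i) (rotate k vs ! ((i + 1) mod ?L))" using assms by simp
qed

lemma has_cycle_max_first:
  assumes "has_cycle V G"
  obtains us where "3 \<le> length us" "distinct us" "set us \<subseteq> V"
    "\<forall>i<length us. adj G (us ! i) (us ! ((i + 1) mod length us))"
    "\<forall>x\<in>set us. card x \<le> card (us ! 0)"
proof -
  obtain vs where vs: "3 \<le> length vs" "distinct vs" "set vs \<subseteq> V"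
    "\<forall>i<length vs. adj G (vs ! i) (vs ! ((i + 1) mod length vs))"
    using assms unfolding has_cycle_def by blast
  have "finite (card ` set vs)" "card ` set vs \<noteq> {}" using vs(1) by auto
  then have "Max (card ` set vs) \<in> card ` set vs" by (rule Max_in)
  then obtain p where p: "p \<in> set vs" "card p = Max (card ` set vs)" by auto
  then obtain k where k: "k < length vs" "vs ! k = p" by (auto simp: in_set_conv_nth)
  let ?us = "rotate k vs"
  have "0 < length vs" using k(1) by linarith
  then have "?us ! 0 = p" using k by (simp add: nth_rotate)
  then have "\<forall>x\<in>set ?us. card x \<le> card (?us ! 0)" using p by simp
  moreover have "\<forall>i<length ?us. adj G (?us ! i) (?us ! ((i + 1) mod length ?us))"
    using cyclic_chain_rotate[OF vs(4)] by simp
  ultimately show ?thesis using vs(1-3) by (intro that[of ?us]) simp_all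
qed

section \<open>Acyclic linearizations have integral duality\<close>

locale simple_lin =
  fixes M :: "monomial set" and C :: "andc set"
  assumes finite_M: "finite M"
    and constraint_subset: "c \<in> C \<Longrightarrow> c \<subseteq> M"
    and resultant_mem: "c \<in> C \<Longrightarrow> \<Union>c \<in> M"
    and card_lt_resultant: "c \<in> C \<Longrightarrow> m \<in> c \<Longrightarrow> card m < card (\<Union>c)"
    and resultant_inj: "c \<in> C \<Longrightarrow> c' \<in> C \<Longrightarrow> \<Union>c = \<Union>c' \<Longrightarrow> c = c'"
    and monomial_nonempty: "m \<in> M \<Longrightarrow> m \<noteq> {}"
    and monomial_cases: "m \<in> M \<Longrightarrow> (\<exists>i. m = {i}) \<or> (\<exists>c\<in>C. \<Union>c = m)"
begin

lemma finite_C: "finite C"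
proof -
  have "C \<subseteq> Pow M" using constraint_subset by blast
  then show ?thesis using finite_M by (simp add: finite_subset)
qed

lemma constraint_nonempty: "c \<in> C \<Longrightarrow> c \<noteq> {}"
  using resultant_mem monomial_nonempty by (metis Union_empty)

lemma constraint_finite: "c \<in> C \<Longrightarrow> finite c"
  using constraint_subset finite_M finite_subset by blast

lemma resultant_notin: "c \<in> C \<Longrightarrow> \<Union>c \<notin> c"
  using card_lt_resultant by (metis less_irrefl)

definition subsystem :: "monomial set \<Rightarrow> andc set \<Rightarrow> bool" where
  "subsystem V G \<longleftrightarrow> V \<subseteq> M \<and> G \<subseteq> C \<and> (\<forall>c\<in>G. c \<subseteq> V \<and> \<Union>c \<in> V)"

lemma subsystem_and_system: "subsystem V G \<Longrightarrow> and_system V G"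
  unfolding subsystem_def and_system_def using finite_M constraint_nonempty
  by (auto intro: finite_subset)

lemma subsystem_M_C: "subsystem M C"
  unfolding subsystem_def using constraint_subset resultant_mem by blast

lemma finite_rows_M_C: "finite (rows M C)"
  using and_system_finite(4)[OF subsystem_and_system[OF subsystem_M_C]] .

lemma exists_top_constraint:
  assumes "G \<subseteq> C" "G \<noteq> {}"
  shows "\<exists>g\<in>G. \<forall>g'\<in>G - {g}. \<Union>g \<notin> g' \<and> \<Union>g \<noteq> \<Union>g'"
proof -
  have fin: "finite G" using assms(1) finite_C finite_subset by blast
  define k where "k = Max ((\<lambda>c. card (\<Union>c)) ` G)"
  have "k \<in> (\<lambda>c. card (\<Union>c)) ` G" unfolding k_def using fin assms(2) by (intro Max_in) auto
  then obtain g where g: "g \<in> G" "card (\<Union>g) = k" by auto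
  have max: "card (\<Union>g') \<le> card (\<Union>g)" if "g' \<in> G" for g'
    unfolding g(2) k_def using fin that by (intro Max_ge) auto
  have "\<forall>g'\<in>G - {g}. \<Union>g \<notin> g' \<and> \<Union>g \<noteq> \<Union>g'"
  proof (intro ballI conjI)
    fix g' assume g': "g' \<in> G - {g}"
    then have "g' \<in> C" "g \<in> C" "g' \<noteq> g" using g(1) assms(1) by auto
    show "\<Union>g \<notin> g'"
    proof
      assume "\<Union>g \<in> g'"
      from card_lt_resultant[OF \<open>g' \<in> C\<close> this] show False using max[of g'] g' by simp
    qed
    show "\<Union>g \<noteq> \<Union>g'" using resultant_inj[OF \<open>g \<in> C\<close> \<open>g' \<in> C\<close>] \<open>g' \<noteq> g\<close> by auto
  qed
  from this g(1) show ?thesis by (rule bexI)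
qed

lemma subsystem_remove_star:
  assumes S: "subsystem V G" and g: "g \<in> G" and top: "\<forall>g'\<in>G - {g}. \<Union>g \<notin> g' \<and> \<Union>g \<noteq> \<Union>g'"
    and apart: "\<forall>m\<in>g. \<forall>g'\<in>G - {g}. m \<notin> g' \<and> m \<noteq> \<Union>g'"
  shows "subsystem (V - insert (\<Union>g) g) (G - {g})"
  unfolding subsystem_def
proof (intro conjI ballI)
  fix c assume c: "c \<in> G - {g}"
  then have "c \<subseteq> V" "\<Union>c \<in> V" using S by (auto simp: subsystem_def)
  moreover have "\<Union>g \<notin> c" "\<Union>g \<noteq> \<Union>c" using top c by auto
  moreover have "m \<notin> c" "m \<noteq> \<Union>c" if "m \<in> g" for m using apart c that by auto
  ultimately show "c \<subseteq> V - insert (\<Union>g) g" "\<Union>c \<in> V - insert (\<Union>g) g" by auto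
qed (use S in \<open>auto simp: subsystem_def\<close>)

lemma subsystem_star: "c \<in> C \<Longrightarrow> subsystem (insert (\<Union>c) c) {c}"
  by (simp add: subsystem_def constraint_subset resultant_mem subset_insertI)

lemma subsystem_Un: "subsystem V1 G1 \<Longrightarrow> subsystem V2 G2 \<Longrightarrow> subsystem (V1 \<union> V2) (G1 \<union> G2)"
  unfolding subsystem_def by blast

lemma subsystem_split_closed:
  assumes S: "subsystem V G" and KV: "K \<subseteq> V" and closed: "\<forall>x y. x \<in> K \<longrightarrow> adj G x y \<longrightarrow> y \<in> K"
  shows "subsystem K {c \<in> G. \<Union>c \<in> K}" and "subsystem (V - K) {c \<in> G. \<Union>c \<notin> K}"
proof -
  have "c \<subseteq> K" if "c \<in> G" "\<Union>c \<in> K" for c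
    using closed adj_resultant_child[OF that(1)] that(2) by blast
  then show "subsystem K {c \<in> G. \<Union>c \<in> K}" using S KV by (auto simp: subsystem_def)
  have "y \<notin> K" if "c \<in> G" "\<Union>c \<notin> K" "y \<in> c" for c y
    using closed adj_child_resultant[OF that(1,3)] that(2) by blast
  then show "subsystem (V - K) {c \<in> G. \<Union>c \<notin> K}" using S by (auto simp: subsystem_def)
qed

lemma child_component:
  assumes S: "subsystem V G" and acyc: "\<not> has_cycle V G" and g: "g \<in> G"
    and top: "\<forall>g'\<in>G - {g}. \<Union>g \<notin> g' \<and> \<Union>g \<noteq> \<Union>g'" and m: "m \<in> g"
  defines "K \<equiv> {x. (adj (G - {g}))\<^sup>*\<^sup>* m x}"
  shows "K \<subseteq> V" and "insert (\<Union>g) g \<inter> K = {m}"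
proof -
  have gV: "g \<subseteq> V" "\<Union>g \<in> V" and gC: "g \<in> C" using S g by (auto simp: subsystem_def)
  have reach: "x = m \<or> (\<exists>g'\<in>G - {g}. x \<in> g' \<or> x = \<Union>g')" if "x \<in> K" for x
    using that rtranclp_adj_cases by (simp add: K_def)
  show "K \<subseteq> V"
  proof
    fix x assume "x \<in> K"
    from reach[OF this] consider "x = m" | g' where "g' \<in> G - {g}" "x \<in> g' \<or> x = \<Union>g'" by blast
    then show "x \<in> V"
    proof cases
      case 2
      then have "g' \<subseteq> V" "\<Union>g' \<in> V" using S by (auto simp: subsystem_def)
      then show ?thesis using 2(2) by auto
    qed (use m gV in auto)
  qed
  have "\<Union>g \<notin> K"
  proof
    assume "\<Union>g \<in> K"
    from reach[OF this] consider "\<Union>g = m" | g' where "g' \<in> G - {g}" "\<Union>g \<in> g' \<or> \<Union>g = \<Union>g'" by blast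
    then show False
      by cases (use m resultant_notin[OF gC] top in auto)
  qed
  moreover have "y \<notin> K" if y: "y \<in> g" "y \<noteq> m" for y
  proof
    assume "y \<in> K"
    then have "(adj (G - {g}))\<^sup>*\<^sup>* m y" by (simp add: K_def)
    with has_cycle_if_children_joined[OF subsystem_and_system[OF S] g resultant_notin[OF gC] top m y(1)] y(2)
    show False using acyc by simp
  qed
  moreover have "m \<in> K" by (simp add: K_def)
  ultimately show "insert (\<Union>g) g \<inter> K = {m}" using m by blast
qed

lemma subsystem_split_at_child:
  assumes S: "subsystem V G" and acyc: "\<not> has_cycle V G" and g: "g \<in> G"
    and top: "\<forall>g'\<in>G - {g}. \<Union>g \<notin> g' \<and> \<Union>g \<noteq> \<Union>g'"
    and m: "m \<in> g" and g0: "g0 \<in> G - {g}" "m \<in> g0 \<or> m = \<Union>g0"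
  shows "\<exists>V1 G1 V2 G2. subsystem V1 G1 \<and> subsystem V2 G2 \<and> V1 \<inter> V2 = {m} \<and>
           V1 \<union> V2 = V \<and> G1 \<union> G2 = G \<and> G1 \<subset> G \<and> G2 \<subset> G"
proof -
  let ?G' = "G - {g}"
  define K where "K = {x. (adj ?G')\<^sup>*\<^sup>* m x}"
  define GK where "GK = {c \<in> ?G'. \<Union>c \<in> K}"
  define star where "star = insert (\<Union>g) g"
  have gC: "g \<in> C" and star_V: "star \<subseteq> V" using S g by (auto simp: subsystem_def star_def)
  have KV: "K \<subseteq> V" and star_K: "star \<inter> K = {m}"
    using child_component[OF S acyc g top m] by (simp_all add: K_def star_def)
  have closed: "\<forall>x y. x \<in> K \<longrightarrow> adj ?G' x y \<longrightarrow> y \<in> K" by (auto simp: K_def)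
  have S': "subsystem V ?G'" using S by (auto simp: subsystem_def)
  have S1: "subsystem K GK" using subsystem_split_closed(1)[OF S' KV closed] by (simp add: GK_def)
  have "subsystem ((V - K) \<union> star) ({c \<in> ?G'. \<Union>c \<notin> K} \<union> {g})"
    using subsystem_Un[OF subsystem_split_closed(2)[OF S' KV closed] subsystem_star[OF gC]]
    by (simp add: star_def)
  moreover have "(V - K) \<union> star = (V - K) \<union> {m}" using star_K star_V by blast
  moreover have "{c \<in> ?G'. \<Union>c \<notin> K} \<union> {g} = G - GK" using g by (auto simp: GK_def)
  ultimately have S2: "subsystem ((V - K) \<union> {m}) (G - GK)" by simp
  have "\<Union>g0 \<in> K"
    using g0 closed adj_child_resultant[of g0 ?G' m] by (auto simp: K_def)
  then have "GK \<subset> G" "G - GK \<subset> G" using g g0 by (auto simp: GK_def)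
  moreover have "K \<inter> ((V - K) \<union> {m}) = {m}" "K \<union> ((V - K) \<union> {m}) = V"
    using star_K star_V KV by auto
  moreover have "GK \<union> (G - GK) = G" by (auto simp: GK_def)
  ultimately show ?thesis using S1 S2 by blast
qed

lemma integral_duality_if_acyclic:
  assumes "subsystem V G" "\<not> has_cycle V G"
  shows "integral_duality V G"
  using assms
proof (induction "card G" arbitrary: V G rule: less_induct)
  case less
  note S = less.prems(1) and acyc = less.prems(2)
  have fin: "finite V" "finite G" using and_system_finite[OF subsystem_and_system[OF S]] by auto
  have IH: "integral_duality V' G'" if "subsystem V' G'" "V' \<subseteq> V" "G' \<subset> G" for V' G'
  proof -
    have "\<not> has_cycle V' G'" using acyc has_cycle_mono that(2,3) by blast
    then show ?thesis using less.hyps[OF psubset_card_mono[OF fin(2) that(3)] that(1)] by simp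
  qed
  show ?case
  proof (cases "G = {}")
    case True
    then show ?thesis using integral_duality_no_constraints[OF fin(1)] by simp
  next
    case False
    moreover have "G \<subseteq> C" using S by (simp add: subsystem_def)
    ultimately have "\<exists>g\<in>G. \<forall>g'\<in>G - {g}. \<Union>g \<notin> g' \<and> \<Union>g \<noteq> \<Union>g'"
      by (intro exists_top_constraint)
    then obtain g where g: "g \<in> G" and top: "\<forall>g'\<in>G - {g}. \<Union>g \<notin> g' \<and> \<Union>g \<noteq> \<Union>g'" ..
    show ?thesis
    proof (cases "\<exists>m\<in>g. \<exists>g0\<in>G - {g}. m \<in> g0 \<or> m = \<Union>g0")
      case True
      then obtain m where m: "m \<in> g" and "\<exists>g0\<in>G - {g}. m \<in> g0 \<or> m = \<Union>g0" ..
      from this(2) obtain g0 where g0: "g0 \<in> G - {g}" "m \<in> g0 \<or> m = \<Union>g0" ..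
      obtain V1 G1 V2 G2 where S1: "subsystem V1 G1" and S2: "subsystem V2 G2"
        and split: "V1 \<inter> V2 = {m}" "V1 \<union> V2 = V" "G1 \<union> G2 = G" "G1 \<subset> G" "G2 \<subset> G"
        using subsystem_split_at_child[OF S acyc g top m g0] by blast
      have "integral_duality (V1 \<union> V2) (G1 \<union> G2)"
        using IH[OF S1] IH[OF S2] split
        by (intro integral_duality_Un_vertex[OF subsystem_and_system[OF S1] subsystem_and_system[OF S2]])
          auto
      then show ?thesis using split by simp
    next
      case False
      let ?star = "insert (\<Union>g) g"
      have gC: "g \<in> C" and gV: "?star \<subseteq> V" using S g by (auto simp: subsystem_def)
      have S2: "subsystem (V - ?star) (G - {g})"
        using subsystem_remove_star[OF S g top] False by blast
      have S1: "subsystem ?star {g}" using subsystem_star[OF gC] .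
      have "finite g" using gV fin(1) finite_subset by auto
      then have "integral_duality ?star {g}"
        using integral_duality_star constraint_nonempty[OF gC] resultant_notin[OF gC] by blast
      moreover have "integral_duality (V - ?star) (G - {g})" using IH[OF S2] g by blast
      ultimately have "integral_duality (?star \<union> (V - ?star)) ({g} \<union> (G - {g}))"
        by (intro integral_duality_disjoint_Un subsystem_and_system S1 S2) auto
      moreover have "?star \<union> (V - ?star) = V" "{g} \<union> (G - {g}) = G" using gV g by auto
      ultimately show ?thesis by simp
    qed
  qed
qed

section \<open>A fractional optimum on a cycle\<close>

definition parent :: "monomial \<Rightarrow> monomial \<Rightarrow> bool" where
  "parent q m \<longleftrightarrow> (\<exists>c\<in>C. q = \<Union>c \<and> m \<in> c)"

definition ancestors :: "monomial \<Rightarrow> monomial set" where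
  "ancestors p = {q \<in> M. parent\<^sup>*\<^sup>* q p}"

lemma card_lt_ancestor:
  assumes "parent\<^sup>*\<^sup>* q p" "q \<noteq> p"
  shows "card p < card q"
proof -
  have "parent\<^sup>+\<^sup>+ q p" using rtranclpD[OF assms(1)] assms(2) by simp
  then show ?thesis
    by (induction rule: tranclp_induct) (auto simp: parent_def dest: card_lt_resultant)
qed

lemma ancestor_child:
  assumes c: "c \<in> C" and anc: "\<Union>c \<in> ancestors p" and ne: "\<Union>c \<noteq> p"
  shows "\<exists>m\<in>c. m \<in> ancestors p"
proof -
  have "parent\<^sup>*\<^sup>* (\<Union>c) p" using anc by (simp add: ancestors_def)
  then obtain m where "parent (\<Union>c) m" "parent\<^sup>*\<^sup>* m p"
    using ne by (metis converse_rtranclpE)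
  then obtain c' where c': "c' \<in> C" "\<Union>c = \<Union>c'" "m \<in> c'" by (auto simp: parent_def)
  then have "m \<in> c" using resultant_inj[OF c c'(1)] by simp
  then show ?thesis
    using \<open>parent\<^sup>*\<^sup>* m p\<close> constraint_subset[OF c] by (auto simp: ancestors_def)
qed

lemma ancestor_parent:
  assumes "c \<in> C" "m \<in> c" "m \<in> ancestors p"
  shows "\<Union>c \<in> ancestors p"
proof -
  have "parent (\<Union>c) m" using assms(1,2) by (auto simp: parent_def)
  then show ?thesis
    using assms(3) resultant_mem[OF assms(1)] by (auto simp: ancestors_def intro: converse_rtranclp_into_rtranclp)
qed

definition adj_in :: "monomial set \<Rightarrow> monomial \<Rightarrow> monomial \<Rightarrow> bool" where
  "adj_in R u v \<longleftrightarrow> u \<in> R \<and> v \<in> R \<and> adj C u v"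

definition inner_rows :: "monomial set \<Rightarrow> row set" where
  "inner_rows R = {Ord c m | c m. c \<in> C \<and> m \<in> c \<and> \<Union>c \<in> R \<and> m \<in> R}"

lemma adj_in_sym: "adj_in R u v \<longleftrightarrow> adj_in R v u"
  unfolding adj_in_def using adj_sym by blast

text \<open>Along a path in R, AND-rows with weights \<delta> (upward step) or 1 - \<delta> (downward step) move
  a charge \<delta> from the start to the end of the path, up to an integral vector.\<close>

lemma path_multipliers:
  assumes \<delta>: "0 \<le> \<delta>" "\<delta> \<le> 1" and path: "(adj_in R)\<^sup>*\<^sup>* u v"
  shows "\<exists>f. (\<forall>r. 0 \<le> f r) \<and> (\<forall>r. f r \<noteq> 0 \<longrightarrow> r \<in> inner_rows R) \<and>
    (\<forall>x. col_val (rows M C) f x - \<delta> * (ind (x = v) - ind (x = u)) \<in> \<int>)"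
  using path
proof (induction rule: rtranclp_induct)
  case base
  show ?case by (intro exI[of _ "\<lambda>r. 0"]) (simp add: col_val_def)
next
  case (step v' v)
  then obtain f where f0: "\<forall>r. 0 \<le> f r" and fR: "\<forall>r. f r \<noteq> 0 \<longrightarrow> r \<in> inner_rows R"
    and fI: "\<forall>x. col_val (rows M C) f x - \<delta> * (ind (x = v') - ind (x = u)) \<in> \<int>"
    by blast
  obtain c m where c: "c \<in> C" "m \<in> c" "\<Union>c \<in> R" "m \<in> R"
    and dir: "(v' = \<Union>c \<and> v = m) \<or> (v' = m \<and> v = \<Union>c)"
    using step.hyps(2) by (auto simp: adj_in_def adj_def)
  define a where "a = (if v' = \<Union>c \<and> v = m then 1 - \<delta> else \<delta>)"
  define f' where "f' = (\<lambda>r. f r + (if r = Ord c m then a else 0))"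
  have fin: "finite (rows M C)" by (rule finite_rows_M_C)
  have row: "Ord c m \<in> rows M C" using c by (auto simp: rows_def)
  have "col_val (rows M C) f' x - \<delta> * (ind (x = v) - ind (x = u)) =
      (col_val (rows M C) f x - \<delta> * (ind (x = v') - ind (x = u))) +
      (if v' = \<Union>c \<and> v = m then ind (x = v') - ind (x = v) else 0)" for x
    using dir unfolding f'_def col_val_add col_val_single[OF fin row]
    by (auto simp: a_def algebra_simps)
  then have "\<forall>x. col_val (rows M C) f' x - \<delta> * (ind (x = v) - ind (x = u)) \<in> \<int>"
    using fI by (auto simp: ind_def)
  moreover have "\<forall>r. 0 \<le> f' r" using f0 \<delta> by (simp add: f'_def a_def)
  moreover have "\<forall>r. f' r \<noteq> 0 \<longrightarrow> r \<in> inner_rows R"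
    using fR c by (auto simp: f'_def inner_rows_def)
  ultimately show ?case by blast
qed

lemma adj_from_larger:
  assumes "adj C u v" "card v \<le> card u"
  shows "\<exists>c\<in>C. u = \<Union>c \<and> v \<in> c"
  using assms card_lt_resultant unfolding adj_def by fastforce

lemma cycle_top_children:
  assumes "has_cycle M C"
  shows "\<exists>g a b. g \<in> C \<and> a \<in> g \<and> b \<in> g \<and> a \<noteq> b \<and> (adj_in (M - ancestors (\<Union>g)))\<^sup>*\<^sup>* a b"
proof -
  obtain us where L: "3 \<le> length us" and dist: "distinct us" and sub: "set us \<subseteq> M"
    and adj: "\<forall>i<length us. adj C (us ! i) (us ! ((i + 1) mod length us))"
    and max: "\<forall>x\<in>set us. card x \<le> card (us ! 0)"
    using has_cycle_max_first[OF assms] by blast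
  let ?L = "length us" and ?p = "us ! 0"
  let ?a = "us ! 1" and ?b = "us ! (?L - 1)"
  have card_le: "card (us ! i) \<le> card ?p" if "i < ?L" for i using max that by simp
  have "us \<noteq> []" using L by auto
  then have "adj C ?p ?a" using adj[rule_format, of 0] L by simp
  then have "\<exists>g\<in>C. ?p = \<Union>g \<and> ?a \<in> g" using card_le[of 1] L by (intro adj_from_larger) simp_all
  then obtain g where g: "g \<in> C" and pg: "?p = \<Union>g \<and> ?a \<in> g" ..
  have "Suc (?L - 1) = ?L" using L by simp
  then have "adj C ?b ?p" using adj[rule_format, of "?L - 1"] L by simp
  then have "\<exists>g'\<in>C. ?p = \<Union>g' \<and> ?b \<in> g'"
    using card_le[of "?L - 1"] L by (intro adj_from_larger) (simp_all add: adj_sym)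
  then obtain g' where g': "g' \<in> C" and pg': "?p = \<Union>g' \<and> ?b \<in> g'" ..
  have "g' = g" using resultant_inj[OF g' g] pg pg' by simp
  have not_anc: "us ! i \<in> M - ancestors ?p" if "0 < i" "i < ?L" for i
  proof -
    have "us ! i \<noteq> ?p" using nth_eq_iff_index_eq[OF dist, of i 0] that \<open>us \<noteq> []\<close> by simp
    then have "\<not> parent\<^sup>*\<^sup>* (us ! i) ?p" using card_lt_ancestor card_le[OF that(2)] by fastforce
    then show ?thesis using sub that by (auto simp: ancestors_def)
  qed
  have path: "(adj_in (M - ancestors ?p))\<^sup>*\<^sup>* ?a (us ! d)" if "1 \<le> d" "d < ?L" for d
    using that
  proof (induction d)
    case (Suc d)
    show ?case
    proof (cases "d = 0")
      case False
      then have IH: "(adj_in (M - ancestors ?p))\<^sup>*\<^sup>* ?a (us ! d)" using Suc by simp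
      have "adj_in (M - ancestors ?p) (us ! d) (us ! Suc d)"
        using adj[rule_format, of d] not_anc[of d] not_anc[of "Suc d"] Suc.prems False
        by (simp add: adj_in_def)
      with IH show ?thesis by (rule rtranclp.rtrancl_into_rtrancl)
    qed simp
  qed simp
  have "?a \<noteq> ?b" using nth_eq_iff_index_eq[OF dist, of 1 "?L - 1"] L by simp
  moreover have "(adj_in (M - ancestors (\<Union>g)))\<^sup>*\<^sup>* ?a ?b" using path[of "?L - 1"] L pg by simp
  ultimately show ?thesis using g pg pg' \<open>g' = g\<close>
    by (intro exI[of _ g] exI[of _ ?a] exI[of _ ?b]) simp
qed

end

locale bridged_children = simple_lin +
  fixes g :: andc and a b :: monomial
  assumes g_in: "g \<in> C" and a_in: "a \<in> g" and b_in: "b \<in> g" and a_ne_b: "a \<noteq> b"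
    and bridge: "(adj_in (M - ancestors (\<Union>g)))\<^sup>*\<^sup>* a b"
begin

definition a_component :: "monomial set" where
  "a_component = {x. (adj_in (M - ancestors (\<Union>g)))\<^sup>*\<^sup>* a x}"

definition frac_monomials :: "monomial set" where
  "frac_monomials = {m \<in> M - ancestors (\<Union>g). m \<inter> \<Union>a_component \<noteq> {}}"

definition frac_children :: "monomial set" where
  "frac_children = g \<inter> frac_monomials"

definition delta :: real where
  "delta = 1 / real (card frac_children)"

definition frac_point :: "monomial \<Rightarrow> real" where
  "frac_point m = (if m \<in> M - ancestors (\<Union>g) then if m \<in> frac_monomials then 1 - delta else 1 else 0)"

lemma child_not_ancestor: "t \<in> g \<Longrightarrow> t \<notin> ancestors (\<Union>g)"
  using card_lt_resultant[OF g_in] card_lt_ancestor by (fastforce simp: ancestors_def)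

lemma resultant_ancestor: "\<Union>g \<in> ancestors (\<Union>g)"
  using resultant_mem[OF g_in] by (simp add: ancestors_def)

lemma a_component_frac_monomials: "x \<in> a_component \<Longrightarrow> x \<in> frac_monomials"
proof -
  assume x: "x \<in> a_component"
  have "(adj_in (M - ancestors (\<Union>g)))\<^sup>*\<^sup>* a x" using x by (simp add: a_component_def)
  then have "x \<in> M - ancestors (\<Union>g)"
  proof (induction rule: rtranclp_induct)
    case base
    show ?case using a_in constraint_subset[OF g_in] child_not_ancestor by auto
  qed (simp add: adj_in_def)
  moreover have "x \<noteq> {}" using calculation monomial_nonempty by blast
  ultimately show ?thesis using x by (auto simp: frac_monomials_def)
qed

lemma frac_children_ab: "a \<in> frac_children" "b \<in> frac_children"
  using a_component_frac_monomials a_in b_in bridge by (auto simp: frac_children_def a_component_def)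

lemma finite_frac_children: "finite frac_children"
  using constraint_subset[OF g_in] finite_M by (auto simp: frac_children_def intro: finite_subset)

lemma card_frac_children: "2 \<le> card frac_children"
proof -
  have "card {a, b} \<le> card frac_children" using frac_children_ab finite_frac_children by (intro card_mono) auto
  then show ?thesis using a_ne_b by simp
qed

lemma delta_bounds: "0 < delta" "delta < 1" "real (card frac_children) * delta = 1"
  using card_frac_children by (auto simp: delta_def)

lemma frac_monomials_parent:
  assumes "c \<in> C" "m \<in> c" "m \<in> frac_monomials" "\<Union>c \<notin> ancestors (\<Union>g)"
  shows "\<Union>c \<in> frac_monomials"
  using assms resultant_mem by (auto simp: frac_monomials_def)

lemma frac_monomials_child:
  assumes c: "c \<in> C" and fs: "\<Union>c \<in> frac_monomials"
  shows "\<exists>m\<in>c. m \<in> frac_monomials"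
proof -
  obtain i where i: "i \<in> \<Union>c" "i \<in> \<Union>a_component" using fs by (auto simp: frac_monomials_def)
  then obtain m where m: "m \<in> c" "i \<in> m" by blast
  have "m \<notin> ancestors (\<Union>g)" using ancestor_parent[OF c m(1)] fs by (auto simp: frac_monomials_def)
  then have "m \<in> frac_monomials" using m i constraint_subset[OF c] by (auto simp: frac_monomials_def)
  then show ?thesis using m(1) by blast
qed

lemma frac_point_bounds: "0 \<le> frac_point m" "frac_point m \<le> 1"
  using delta_bounds by (auto simp: frac_point_def)

lemma frac_point_Ord:
  assumes c: "c \<in> C" and m: "m \<in> c"
  shows "frac_point (\<Union>c) \<le> frac_point m"
proof (cases "\<Union>c \<in> ancestors (\<Union>g)")
  case True
  then show ?thesis using frac_point_bounds by (simp add: frac_point_def)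
next
  case False
  then have "m \<in> M - ancestors (\<Union>g)"
    using ancestor_parent[OF c m] constraint_subset[OF c] m by blast
  then show ?thesis
    using False frac_monomials_parent[OF c m] resultant_mem[OF c] delta_bounds by (auto simp: frac_point_def)
qed

lemma frac_point_Sm:
  assumes c: "c \<in> C"
  shows "1 - frac_point (\<Union>c) \<le> (\<Sum>m\<in>c. 1 - frac_point m)"
proof -
  have fc: "finite c" using constraint_subset[OF c] finite_M finite_subset by blast
  have nn: "\<forall>m\<in>c. 0 \<le> 1 - frac_point m" using frac_point_bounds by simp
  have single: "1 - frac_point (\<Union>c) \<le> (\<Sum>m\<in>c. 1 - frac_point m)"
    if "m \<in> c" "frac_point m \<le> frac_point (\<Union>c)" for m
    using member_le_sum[OF that(1), of "\<lambda>m. 1 - frac_point m"] nn fc that(2) by simp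
  show ?thesis
  proof (cases "\<Union>c = \<Union>g")
    case True
    then have "c = g" using resultant_inj[OF c g_in] by simp
    have "(\<Sum>m\<in>frac_children. 1 - frac_point m) = real (card frac_children) * delta"
      by (simp add: frac_children_def frac_monomials_def frac_point_def)
    also have "\<dots> = 1" using delta_bounds by simp
    finally have "(\<Sum>m\<in>frac_children. 1 - frac_point m) = 1" .
    moreover have "(\<Sum>m\<in>frac_children. 1 - frac_point m) \<le> (\<Sum>m\<in>c. 1 - frac_point m)"
      using fc nn \<open>c = g\<close> by (intro sum_mono2) (auto simp: frac_children_def)
    moreover have "frac_point (\<Union>c) = 0" using True resultant_ancestor by (simp add: frac_point_def)
    ultimately show ?thesis by simp
  next
    case False
    consider "\<Union>c \<in> ancestors (\<Union>g)" | "\<Union>c \<in> frac_monomials" | "frac_point (\<Union>c) = 1"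
      using resultant_mem[OF c] unfolding frac_point_def
      by (cases "\<Union>c \<in> ancestors (\<Union>g)"; cases "\<Union>c \<in> frac_monomials") auto
    then show ?thesis
    proof cases
      case 1
      then obtain m where "m \<in> c" "m \<in> ancestors (\<Union>g)" using ancestor_child[OF c 1 False] by blast
      then show ?thesis using single frac_point_bounds by (simp add: frac_point_def)
    next
      case 2
      then obtain m where "m \<in> c" "m \<in> frac_monomials" using frac_monomials_child[OF c] by blast
      then show ?thesis using single 2 by (simp add: frac_point_def frac_monomials_def)
    next
      case 3
      then show ?thesis using nn by (simp add: sum_nonneg)
    qed
  qed
qed

lemma frac_point_feasible: "frac_point \<in> PL M C"
  unfolding mem_PL
proof (intro conjI allI impI ballI)
  fix r assume r: "r \<in> rows M C"
  show "row_val M r frac_point \<le> rhs r"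
  proof (cases r)
    case (Ord c m)
    then have c: "c \<in> C" "m \<in> c" using r by (auto simp: rows_def)
    then have "m \<in> M" "\<Union>c \<in> M" using constraint_subset resultant_mem by auto
    then show ?thesis using Ord frac_point_Ord[OF c] finite_M by (simp add: row_val_Ord)
  next
    case (Sm c)
    then have c: "c \<in> C" using r by (auto simp: rows_def)
    have "(\<Sum>m\<in>c. 1 - frac_point m) = real (card c) - (\<Sum>m\<in>c. frac_point m)"
      by (simp add: sum_subtractf)
    then show ?thesis
      using Sm frac_point_Sm[OF c] finite_M resultant_mem[OF c] constraint_subset[OF c]
      by (simp add: row_val_Sm)
  qed (use r finite_M frac_point_bounds in \<open>auto simp: rows_def row_val_Lo row_val_Up\<close>)
qed (simp add: frac_point_def)

lemma frac_point_tight: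
  assumes "r \<in> inner_rows frac_monomials \<or> r = Sm g"
  shows "row_val M r frac_point = rhs r"
  using assms
proof
  assume "r \<in> inner_rows frac_monomials"
  then obtain c m where "r = Ord c m" "\<Union>c \<in> frac_monomials" "m \<in> frac_monomials" by (auto simp: inner_rows_def)
  then show ?thesis using finite_M by (simp add: row_val_Ord frac_monomials_def frac_point_def)
next
  assume r: "r = Sm g"
  have "(\<Sum>m\<in>g. frac_point m) = (\<Sum>m\<in>g. 1 - (if m \<in> frac_children then delta else 0))"
    using constraint_subset[OF g_in] child_not_ancestor by (intro sum.cong) (auto simp: frac_children_def frac_point_def)
  also have "\<dots> = real (card g) - (\<Sum>m\<in>g \<inter> frac_children. delta)"
    using sum.inter_restrict[OF constraint_finite[OF g_in], of "\<lambda>_. delta" frac_children]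
    by (simp add: sum_subtractf)
  also have "g \<inter> frac_children = frac_children" by (auto simp: frac_children_def)
  finally have "(\<Sum>m\<in>g. frac_point m) = real (card g) - 1" using delta_bounds by simp
  moreover have "frac_point (\<Union>g) = 0" using resultant_ancestor by (simp add: frac_point_def)
  ultimately show ?thesis
    using r finite_M constraint_subset[OF g_in] resultant_mem[OF g_in] by (simp add: row_val_Sm)
qed

lemma adj_in_rtranclp_sym: "(adj_in R)\<^sup>*\<^sup>* u v \<Longrightarrow> (adj_in R)\<^sup>*\<^sup>* v u"
  using symp_rtranclp[of "adj_in R"] adj_in_sym by (simp add: symp_def)

lemma frac_monomials_to_variable:
  assumes "m \<in> frac_monomials" "i \<in> m" "i \<in> \<Union>a_component"
  shows "(adj_in frac_monomials)\<^sup>*\<^sup>* m {i}"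
  using assms
proof (induction "card m" arbitrary: m rule: less_induct)
  case less
  show ?case
  proof (cases "m = {i}")
    case False
    have "m \<in> M" using less.prems(1) by (simp add: frac_monomials_def)
    then obtain c where c: "c \<in> C" "\<Union>c = m"
      using monomial_cases False less.prems(2) by blast
    then obtain m' where m': "m' \<in> c" "i \<in> m'" using less.prems(2) by blast
    have "m' \<notin> ancestors (\<Union>g)"
      using ancestor_parent[OF c(1) m'(1)] c(2) less.prems(1) by (auto simp: frac_monomials_def)
    then have "m' \<in> frac_monomials" using m' constraint_subset[OF c(1)] less.prems(3) by (auto simp: frac_monomials_def)
    moreover have "card m' < card m" using card_lt_resultant[OF c(1) m'(1)] c(2) by simp
    ultimately have "(adj_in frac_monomials)\<^sup>*\<^sup>* m' {i}" using less m' by blast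
    moreover have "adj_in frac_monomials m m'"
      using adj_resultant_child[OF c(1) m'(1)] c(2) less.prems(1) \<open>m' \<in> frac_monomials\<close> by (simp add: adj_in_def)
    ultimately show ?thesis by (rule converse_rtranclp_into_rtranclp[rotated])
  qed simp
qed

lemma frac_monomials_connected:
  assumes m: "m \<in> frac_monomials"
  shows "(adj_in frac_monomials)\<^sup>*\<^sup>* m a"
proof -
  obtain i k where i: "i \<in> m" "i \<in> k" and k: "k \<in> a_component" using m by (auto simp: frac_monomials_def)
  have "(adj_in frac_monomials)\<^sup>*\<^sup>* a x" if "x \<in> a_component" for x
  proof -
    have "(adj_in (M - ancestors (\<Union>g)))\<^sup>*\<^sup>* a x" using that by (simp add: a_component_def)
    then show ?thesis
    proof (induction rule: rtranclp_induct)
      case (step y z)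
      have "(adj_in (M - ancestors (\<Union>g)))\<^sup>*\<^sup>* a z"
        using step.hyps by (rule rtranclp.rtrancl_into_rtrancl)
      then have "y \<in> frac_monomials" "z \<in> frac_monomials" using step.hyps(1) a_component_frac_monomials by (auto simp: a_component_def)
      with step show ?case by (auto simp: adj_in_def intro: rtranclp.rtrancl_into_rtrancl)
    qed simp
  qed
  moreover have "i \<in> \<Union>a_component" using i k by blast
  ultimately show ?thesis
    using frac_monomials_to_variable[OF m i(1)] frac_monomials_to_variable[OF a_component_frac_monomials[OF k] i(2)] k
    by (meson adj_in_rtranclp_sym rtranclp_trans)
qed

lemma frac_monomials_disjoint_ancestors: "x \<in> frac_monomials \<Longrightarrow> x \<noteq> \<Union>g"
  using resultant_ancestor by (auto simp: frac_monomials_def)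

lemma finite_frac_monomials: "finite frac_monomials"
  using finite_M by (simp add: frac_monomials_def)

lemma inner_rows_rows: "inner_rows R \<subseteq> rows M C"
  by (auto simp: inner_rows_def rows_def)

lemma sum_col_val_frac_monomials:
  assumes "\<forall>r. \<mu> r \<noteq> 0 \<longrightarrow> r \<in> inner_rows frac_monomials \<or> r = Sm g"
  shows "(\<Sum>x\<in>frac_monomials. col_val (rows M C) \<mu> x) = \<mu> (Sm g) * real (card frac_children)"
proof -
  have "(\<Sum>x\<in>frac_monomials. col_val (rows M C) \<mu> x) =
      (\<Sum>r\<in>rows M C. \<mu> r * row_val frac_monomials r (\<lambda>_. 1))"
    using primal_value_col_val[of frac_monomials "rows M C" \<mu> "\<lambda>_. 1"] by (simp add: primal_value_def)
  also have "\<dots> = (\<Sum>r\<in>rows M C. if r = Sm g then \<mu> (Sm g) * real (card frac_children) else 0)"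
  proof (intro sum.cong refl)
    fix r assume "r \<in> rows M C"
    consider "\<mu> r = 0" | "r \<in> inner_rows frac_monomials" | "r = Sm g" using assms by blast
    then show "\<mu> r * row_val frac_monomials r (\<lambda>_. 1) = (if r = Sm g then \<mu> (Sm g) * real (card frac_children) else 0)"
    proof cases
      case 2
      then obtain c m where "r = Ord c m" "\<Union>c \<in> frac_monomials" "m \<in> frac_monomials" by (auto simp: inner_rows_def)
      then show ?thesis using finite_frac_monomials by (simp add: row_val_Ord)
    next
      case 3
      have "row_val frac_monomials (Sm g) (\<lambda>_. 1) = (\<Sum>m\<in>frac_monomials. ind (m \<in> g)) - (\<Sum>m\<in>frac_monomials. ind (m = \<Union>g))"
        by (simp add: row_val_def sum_subtractf)
      also have "(\<Sum>m\<in>frac_monomials. ind (m = \<Union>g)) = 0"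
        using frac_monomials_disjoint_ancestors by (intro sum.neutral) simp
      also have "(\<Sum>m\<in>frac_monomials. ind (m \<in> g)) = real (card (frac_monomials \<inter> g))"
        using sum.inter_restrict[OF finite_frac_monomials, of "\<lambda>_. 1::real" g] by (simp add: ind_def)
      also have "frac_monomials \<inter> g = frac_children" by (auto simp: frac_children_def)
      finally show ?thesis using 3 by simp
    qed auto
  qed
  also have "\<dots> = \<mu> (Sm g) * real (card frac_children)"
    using finite_rows_M_C g_in
    by (simp add: sum.delta' rows_def)
  finally show ?thesis .
qed

text \<open>Each child of g in the fractional set sends a charge delta to a along a path inside the
  set; together with delta on the sum row of g this gives integral weights on the set, of total 1.\<close>

lemma routing_dual:
  "\<exists>\<mu>. (\<forall>r. r \<notin> rows M C \<longrightarrow> \<mu> r = 0) \<and> (\<forall>r. 0 \<le> \<mu> r) \<and>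
       (\<forall>r. \<mu> r \<noteq> 0 \<longrightarrow> r \<in> inner_rows frac_monomials \<or> r = Sm g) \<and>
       (\<forall>x\<in>frac_monomials. col_val (rows M C) \<mu> x \<in> \<int>) \<and>
       (\<Sum>x\<in>frac_monomials. col_val (rows M C) \<mu> x) = 1"
proof -
  let ?R = "rows M C"
  have "\<forall>t\<in>frac_children. \<exists>f. (\<forall>r. 0 \<le> f r) \<and> (\<forall>r. f r \<noteq> 0 \<longrightarrow> r \<in> inner_rows frac_monomials) \<and>
      (\<forall>x. col_val ?R f x - delta * (ind (x = a) - ind (x = t)) \<in> \<int>)"
    using path_multipliers[of delta] delta_bounds frac_monomials_connected by (auto simp: frac_children_def)
  then obtain F where F0: "\<forall>t\<in>frac_children. \<forall>r. 0 \<le> F t r"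
    and FR: "\<forall>t\<in>frac_children. \<forall>r. F t r \<noteq> 0 \<longrightarrow> r \<in> inner_rows frac_monomials"
    and FI: "\<forall>t\<in>frac_children. \<forall>x. col_val ?R (F t) x - delta * (ind (x = a) - ind (x = t)) \<in> \<int>"
    by metis
  define \<mu> where "\<mu> = (\<lambda>r. (\<Sum>t\<in>frac_children. F t r) + (if r = Sm g then delta else 0))"
  have fin: "finite ?R" by (rule finite_rows_M_C)
  have Sm: "Sm g \<in> ?R" using g_in by (auto simp: rows_def)
  have supp: "\<forall>r. \<mu> r \<noteq> 0 \<longrightarrow> r \<in> inner_rows frac_monomials \<or> r = Sm g"
  proof (intro allI impI)
    fix r assume "\<mu> r \<noteq> 0"
    then have "(\<Sum>t\<in>frac_children. F t r) \<noteq> 0 \<or> r = Sm g" by (auto simp: \<mu>_def split: if_splits)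
    then show "r \<in> inner_rows frac_monomials \<or> r = Sm g" using FR by (meson sum.neutral)
  qed
  have col: "col_val ?R \<mu> x = (\<Sum>t\<in>frac_children. col_val ?R (F t) x) + delta * coef (Sm g) x" for x
    unfolding \<mu>_def col_val_add col_val_sum[OF finite_frac_children] col_val_single[OF fin Sm] ..
  have "col_val ?R \<mu> x \<in> \<int>" if x: "x \<in> frac_monomials" for x
  proof -
    define Z where "Z = (\<Sum>t\<in>frac_children. col_val ?R (F t) x - delta * (ind (x = a) - ind (x = t)))"
    have "Z \<in> \<int>" using FI by (simp add: Z_def Ints_sum)
    have "(\<Sum>t\<in>frac_children. ind (x = t)) = ind (x \<in> frac_children)"
      using finite_frac_children by (simp add: ind_def)
    moreover have "coef (Sm g) x = ind (x \<in> frac_children)"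
      using x frac_monomials_disjoint_ancestors by (auto simp: frac_children_def ind_def)
    ultimately have "col_val ?R \<mu> x = Z + real (card frac_children) * delta * ind (x = a)"
      unfolding col Z_def by (simp add: sum_subtractf sum.distrib right_diff_distrib sum_distrib_left[symmetric])
    then show ?thesis using \<open>Z \<in> \<int>\<close> delta_bounds by (simp add: ind_def)
  qed
  moreover have "\<mu> (Sm g) = delta"
    using FR by (auto simp: \<mu>_def inner_rows_def intro!: sum.neutral)
  then have "(\<Sum>x\<in>frac_monomials. col_val ?R \<mu> x) = 1"
    using sum_col_val_frac_monomials[OF supp] delta_bounds by (simp add: mult.commute)
  moreover have "\<forall>r. r \<notin> ?R \<longrightarrow> \<mu> r = 0" using supp inner_rows_rows Sm by blast
  moreover have "\<forall>r. 0 \<le> \<mu> r" using F0 delta_bounds by (simp add: \<mu>_def sum_nonneg)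
  ultimately show ?thesis using supp by blast
qed

lemma fractional_optimum:
  "\<exists>w l. (\<forall>m\<in>M. w m \<in> \<int>) \<and> l \<in> dual_set M C w \<and>
     primal_value M w frac_point = dual_value (rows M C) l \<and> primal_value M w frac_point \<notin> \<int>"
proof -
  obtain \<mu> where \<mu>0: "\<forall>r. r \<notin> rows M C \<longrightarrow> \<mu> r = 0" and \<mu>_nn: "\<forall>r. 0 \<le> \<mu> r"
    and supp: "\<forall>r. \<mu> r \<noteq> 0 \<longrightarrow> r \<in> inner_rows frac_monomials \<or> r = Sm g"
    and \<mu>I: "\<forall>x\<in>frac_monomials. col_val (rows M C) \<mu> x \<in> \<int>"
    and \<mu>1: "(\<Sum>x\<in>frac_monomials. col_val (rows M C) \<mu> x) = 1"
    using routing_dual by blast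
  have frac_iff: "frac_point m \<noteq> 0 \<and> frac_point m \<noteq> 1 \<longleftrightarrow> m \<in> frac_monomials" for m
    using delta_bounds by (auto simp: frac_point_def frac_monomials_def)
  have "\<forall>c\<in>C. finite c" using constraint_finite by blast
  moreover have "\<forall>r\<in>rows M C. \<mu> r \<noteq> 0 \<longrightarrow> row_val M r frac_point = rhs r"
    using supp frac_point_tight by blast
  moreover have "\<forall>m\<in>M. frac_point m \<noteq> 0 \<longrightarrow> frac_point m \<noteq> 1 \<longrightarrow> col_val (rows M C) \<mu> m \<in> \<int>"
    using frac_iff \<mu>I by blast
  ultimately obtain l w where l: "l \<in> dual_set M C w" and w: "\<forall>m\<in>M. w m \<in> \<int>"
    and eq: "primal_value M w frac_point = dual_value (rows M C) l"
    and w_frac: "\<forall>m\<in>M. frac_point m \<noteq> 0 \<longrightarrow> frac_point m \<noteq> 1 \<longrightarrow> w m = col_val (rows M C) \<mu> m"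
    using rounded_dual[OF finite_M finite_C _ \<mu>0 \<mu>_nn] by blast
  have FM: "frac_monomials \<subseteq> M" by (auto simp: frac_monomials_def)
  have "primal_value M w frac_point =
      (\<Sum>x\<in>frac_monomials. w x * frac_point x) + (\<Sum>x\<in>M - frac_monomials. w x * frac_point x)"
    unfolding primal_value_def using finite_M FM by (simp add: sum.subset_diff)
  also have "(\<Sum>x\<in>frac_monomials. w x * frac_point x) = (\<Sum>x\<in>frac_monomials. col_val (rows M C) \<mu> x * (1 - delta))"
  proof (intro sum.cong refl)
    fix x assume x: "x \<in> frac_monomials"
    then have "x \<in> M" "frac_point x = 1 - delta" using FM by (auto simp: frac_point_def frac_monomials_def)
    moreover have "w x = col_val (rows M C) \<mu> x" using w_frac calculation(1) frac_iff[of x] x by simp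
    ultimately show "w x * frac_point x = col_val (rows M C) \<mu> x * (1 - delta)" by simp
  qed
  also have "\<dots> = 1 - delta" using \<mu>1 by (simp add: sum_distrib_right[symmetric])
  finally have val: "primal_value M w frac_point = (1 + (\<Sum>x\<in>M - frac_monomials. w x * frac_point x)) - delta"
    by simp
  have "frac_point x \<in> \<int>" if "x \<in> M - frac_monomials" for x
    using that frac_iff[of x] by (cases "frac_point x = 0") auto
  then have "1 + (\<Sum>x\<in>M - frac_monomials. w x * frac_point x) \<in> \<int>"
    using w by (auto intro!: Ints_add Ints_sum Ints_mult)
  then have "primal_value M w frac_point \<notin> \<int>"
    unfolding val using delta_bounds by (intro Ints_diff_not_Ints)
  then show ?thesis using l w eq by blast
qed

end

section \<open>The characterization\<close>

context simple_lin
begin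

theorem integral_iff_acyclic_iff_TDI:
  "(integral_polytope M (PL M C) \<longleftrightarrow> acyclic_graph M C) \<and>
   (acyclic_graph M C \<longleftrightarrow> TDI M (rows M C) coef rhs)"
proof (cases "has_cycle M C")
  case True
  from cycle_top_children[OF True] obtain g where
    "\<exists>a b. g \<in> C \<and> a \<in> g \<and> b \<in> g \<and> a \<noteq> b \<and> (adj_in (M - ancestors (\<Union>g)))\<^sup>*\<^sup>* a b" ..
  then obtain a b where "g \<in> C \<and> a \<in> g \<and> b \<in> g \<and> a \<noteq> b \<and> (adj_in (M - ancestors (\<Union>g)))\<^sup>*\<^sup>* a b"
    by (elim exE)
  then interpret bridged_children M C g a b by unfold_locales simp_all
  obtain w l where "\<forall>m\<in>M. w m \<in> \<int>" "l \<in> dual_set M C w"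
    "primal_value M w frac_point = dual_value (rows M C) l" "primal_value M w frac_point \<notin> \<int>"
    using fractional_optimum by blast
  then have "\<not> integral_polytope M (PL M C)" "\<not> TDI M (rows M C) coef rhs"
    using fractional_optimum_obstructs[OF finite_M _ _ frac_point_feasible]
      finite_rows_M_C by blast+
  then show ?thesis using True by (simp add: acyclic_graph_def)
next
  case False
  then have "integral_duality M C" by (intro integral_duality_if_acyclic subsystem_M_C)
  then show ?thesis
    using False integral_polytope_if_integral_duality TDI_if_integral_duality
      finite_rows_M_C
    by (simp add: acyclic_graph_def)
qed

end

lemma resultant_proper:
  assumes sl: "simple_linearization n M C" and c: "c \<in> C"
  shows "\<Union>c \<in> proper_monomials n M"
proof -
  let ?P = "proper_monomials n M"
  let ?C' = "{c \<in> C. \<Union>c \<in> ?P}"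
  have lin: "linearization n M C" and uniq: "\<forall>m\<in>?P. \<exists>!c. c \<in> C \<and> \<Union>c = m"
    and card: "card C = card ?P"
    using sl by (auto simp: simple_linearization_def)
  have "M \<subseteq> Pow {1..n}" using lin by (auto simp: linearization_def)
  then have "finite M" by (rule finite_subset) simp
  moreover have "C \<subseteq> Pow M" using lin by (auto simp: linearization_def)
  ultimately have fC: "finite C" using finite_subset by auto
  have "bij_betw Union ?C' ?P"
    unfolding bij_betw_def
  proof
    show "inj_on Union ?C'"
    proof (rule inj_onI)
      fix c c' assume c: "c \<in> ?C'" and c': "c' \<in> ?C'" and eq: "\<Union>c = \<Union>c'"
      then have "\<exists>!d. d \<in> C \<and> \<Union>d = \<Union>c" using uniq by simp
      then show "c = c'" using c c' eq by (metis (mono_tags, lifting) mem_Collect_eq)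
    qed
    show "Union ` ?C' = ?P"
    proof (intro equalityI subsetI)
      fix m assume "m \<in> Union ` ?C'"
      then show "m \<in> ?P" by (elim imageE) simp
    next
      fix m assume m: "m \<in> ?P"
      from uniq[rule_format, OF m] have "\<exists>c. c \<in> C \<and> \<Union>c = m" by (rule ex1_implies_ex)
      then obtain c where "c \<in> C \<and> \<Union>c = m" ..
      then show "m \<in> Union ` ?C'" using m by (intro rev_image_eqI[of c]) simp_all
    qed
  qed
  then have "card ?C' = card C" using card by (simp add: bij_betw_same_card)
  then have "?C' = C" using fC by (intro card_subset_eq) auto
  then have "c \<in> ?C'" using c by simp
  then show ?thesis by simp
qed

lemma simple_lin_if_simple_linearization:
  assumes sl: "simple_linearization n M C"
  shows "simple_lin M C"
proof -
  let ?S = "{{i} | i. i \<in> {1..n}}"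
  have lin: "linearization n M C" and uniq: "\<forall>m\<in>proper_monomials n M. \<exists>!c. c \<in> C \<and> \<Union>c = m"
    using sl by (auto simp: simple_linearization_def)
  have M: "\<forall>m\<in>M. m \<noteq> {} \<and> m \<subseteq> {1..n}" and C: "\<forall>c\<in>C. c \<subseteq> M \<and> \<Union>c \<in> M"
    and cons: "\<forall>m\<in>M - ?S. \<exists>c\<in>C. \<Union>c = m \<and> (\<forall>m'\<in>c. card m' < card m)"
    using lin by (simp_all add: linearization_def)
  have inj: "c = c'" if "c \<in> C" "c' \<in> C" "\<Union>c = \<Union>c'" for c c'
    using uniq resultant_proper[OF sl that(1)] that by metis
  show ?thesis
  proof
    have "M \<subseteq> Pow {1..n}" using M by blast
    then show "finite M" by (rule finite_subset) simp
  next
    fix c m assume c: "c \<in> C" and m: "m \<in> c"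
    have "\<Union>c \<in> M - ?S" using resultant_proper[OF sl c] by (simp add: proper_monomials_def)
    from cons[rule_format, OF this] obtain c' where
      "c' \<in> C" and "\<Union>c' = \<Union>c \<and> (\<forall>m'\<in>c'. card m' < card (\<Union>c))" ..
    then show "card m < card (\<Union>c)" using inj[OF c] m by metis
  next
    fix m assume m: "m \<in> M"
    show "(\<exists>i. m = {i}) \<or> (\<exists>c\<in>C. \<Union>c = m)"
    proof (cases "m \<in> ?S")
      case False
      with m have "m \<in> M - ?S" by simp
      from cons[rule_format, OF this] obtain c where "c \<in> C" and "\<Union>c = m \<and> (\<forall>m'\<in>c. card m' < card m)" ..
      then show ?thesis by auto
    qed auto
  next
    show "\<And>c. c \<in> C \<Longrightarrow> c \<subseteq> M" "\<And>c. c \<in> C \<Longrightarrow> \<Union>c \<in> M" "\<And>m. m \<in> M \<Longrightarrow> m \<noteq> {}"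
      using M C by simp_all
  qed (rule inj)
qed

theorem corollary3p7:
  fixes n :: nat and M :: "nat set set" and C :: "nat set set set"
  assumes "simple_linearization n M C"
  shows "(integral_polytope M (PL M C) \<longleftrightarrow> acyclic_graph M C) \<and>
         (acyclic_graph M C \<longleftrightarrow> TDI M (rows M C) coef rhs)"
proof -
  interpret simple_lin M C using simple_lin_if_simple_linearization[OF assms] .
  show ?thesis by (rule integral_iff_acyclic_iff_TDI)
qed

end
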